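(* Consider the censored delayed-feedback bandit model with threshold $m\ge1$ (see context), with arm $1$ the unique optimal arm, $\Delta_k=\theta_1-\theta_k>0$ for $k\neq1$, and $\tau_m>0$. Let $\epsilon>0$ and run the algorithm DelayedUCB with exploration function $\beta_\epsilon(t)=(1+\epsilon)\log t$. Then its expected regret satisfies \[ L(T)\le (1+\epsilon)\log(T)\sum_{k\neq1}\frac{1}{2\tau_m\Delta_k}+o(\log T), \] where the $o(\log T)$ term (which may depend on $\epsilon$, $m$, $\theta$ and the delay distribution) divided by $\log T$ tends to $0$ as $T\to\infty$.
   Context: Censored delayed-feedback bandit model: $K$ arms with unknown conversion rates $\theta_1,\dots,\theta_K\in[0,1]$; a known delay distribution on $\mathbb{N}$ with CDF $\tau_d=\mathbb{P}(D\le d)$; a threshold $m\ge1$. At each round $t$ the learner picks $A_t\in\{1,\dots,K\}$ based on past observations; this triggers, conditionally independently given the past, $C_t\sim\mathrm{Bernoulli}(\theta_{A_t})$ and a delay $D_t\sim\tau$. With $X_{s,t}=C_s\mathbf{1}\{D_s\le t-s\}$, at round $t$ the learner observes $X_{s,t}$ for $t-m\le s\le t$ and receives reward $Y_t=\sum_{s=t-m}^tC_s\mathbf{1}\{D_s=t-s\}$. Expected regret: $L(T)=\mathbb{E}[r^*(T)-r(T)]$, $r(T)=\sum_{t\le T}Y_t$, $r^*(T)$ the cumulated reward of the oracle always playing arm $1$. Estimators: $N_k(t)=\sum_{s=1}^{t-1}\mathbf{1}\{A_s=k\}$; $\tilde N_k(t)=\tau_m\sum_{s=1}^{t-m}\mathbf{1}\{A_s=k\}+\sum_{s=t-m+1}^{t-1}\mathbf{1}\{A_s=k\}\tau_{t-s}$;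 $S_k(t)=\sum_{s=1}^{t-1}\mathbf{1}\{A_s=k\}C_s\mathbf{1}\{D_s\le\min(t-s,m)\}$ (the number of conversions of previous pulls of arm $k$ observed by time $t$); $\hat\theta_k(t)=S_k(t)/\tilde N_k(t)$. DelayedUCB: during the first $K$ rounds play each arm once; for $t>K$ play $A_t\in\arg\max_kU_k(t)$ where $U_k(t)=\hat\theta_k(t)+\sqrt{N_k(t)/\tilde N_k(t)}\sqrt{\beta_\epsilon(t)/(2\tilde N_k(t))}$. *)

theory Defs
  imports "HOL-Probability.Probability"
begin

text \<open>Censored delayed-feedback bandit model.
  A history of length n is a list whose entry at index s-1 records round s:
  (A_s, C_s, D_s) = (arm pulled, conversion, delay). Arms are 1..K.\<close>

type_synonym hist = "(nat \<times> bool \<times> nat) list"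

definition arm :: "hist \<Rightarrow> nat \<Rightarrow> nat" where
  "arm h s = fst (h ! (s - 1))"

definition conv :: "hist \<Rightarrow> nat \<Rightarrow> bool" where
  "conv h s = fst (snd (h ! (s - 1)))"

definition dly :: "hist \<Rightarrow> nat \<Rightarrow> nat" where
  "dly h s = snd (snd (h ! (s - 1)))"

definition tau :: "nat pmf \<Rightarrow> nat \<Rightarrow> real" where
  "tau Dl d = measure_pmf.prob Dl {..d}"

definition Nk :: "hist \<Rightarrow> nat \<Rightarrow> nat \<Rightarrow> real" where
  "Nk h k t = real (card {s \<in> {1..t-1}. arm h s = k})"

definition Ntil :: "nat pmf \<Rightarrow> nat \<Rightarrow> hist \<Rightarrow> nat \<Rightarrow> nat \<Rightarrow> real" where
  "Ntil Dl m h k t =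
     tau Dl m * real (card {s \<in> {1..t-m}. arm h s = k})
     + (\<Sum>s\<in>{t-m+1..t-1}. if arm h s = k then tau Dl (t - s) else 0)"

definition Sk :: "nat \<Rightarrow> hist \<Rightarrow> nat \<Rightarrow> nat \<Rightarrow> real" where
  "Sk m h k t = real (card {s \<in> {1..t-1}. arm h s = k \<and> conv h s \<and> dly h s \<le> min (t - s) m})"

definition theta_hat :: "nat pmf \<Rightarrow> nat \<Rightarrow> hist \<Rightarrow> nat \<Rightarrow> nat \<Rightarrow> real" where
  "theta_hat Dl m h k t = Sk m h k t / Ntil Dl m h k t"

definition ucb :: "nat pmf \<Rightarrow> nat \<Rightarrow> (nat \<Rightarrow> real) \<Rightarrow> hist \<Rightarrow> nat \<Rightarrow> nat \<Rightarrow> real" where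
  "ucb Dl m beta h k t =
     theta_hat Dl m h k t
     + sqrt (Nk h k t / Ntil Dl m h k t) * sqrt (beta t / (2 * Ntil Dl m h k t))"

text \<open>A (deterministic, history-based) policy pol is a DelayedUCB policy:
  the current round is t = length h + 1; in the first K rounds each arm is
  played once (in any order), afterwards an arm maximizing the UCB index is
  played (ties broken arbitrarily).\<close>
definition is_delayed_ucb :: "nat \<Rightarrow> nat pmf \<Rightarrow> nat \<Rightarrow> (nat \<Rightarrow> real) \<Rightarrow> (hist \<Rightarrow> nat) \<Rightarrow> bool" where
  "is_delayed_ucb K Dl m beta pol \<longleftrightarrow>
     (\<forall>h. (length h < K \<longrightarrow> pol h \<in> {1..K} - set (map fst h)) \<and>
          (K \<le> length h \<longrightarrow> pol h \<in> {1..K} \<and>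
              (\<forall>j\<in>{1..K}. ucb Dl m beta h j (length h + 1)
                          \<le> ucb Dl m beta h (pol h) (length h + 1))))"

fun hist_pmf :: "(nat \<Rightarrow> real) \<Rightarrow> nat pmf \<Rightarrow> (hist \<Rightarrow> nat) \<Rightarrow> nat \<Rightarrow> hist pmf" where
  "hist_pmf \<theta> Dl pol 0 = return_pmf []"
| "hist_pmf \<theta> Dl pol (Suc n) =
     bind_pmf (hist_pmf \<theta> Dl pol n) (\<lambda>h.
       bind_pmf (bernoulli_pmf (\<theta> (pol h))) (\<lambda>c.
         bind_pmf Dl (\<lambda>d. return_pmf (h @ [(pol h, c, d)]))))"

definition reward :: "nat \<Rightarrow> hist \<Rightarrow> nat \<Rightarrow> real" where
  "reward m h t = (\<Sum>s\<in>{max 1 (t - m)..t}. if conv h s \<and> dly h s = t - s then 1 else 0)"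

definition cum_reward :: "nat \<Rightarrow> hist \<Rightarrow> nat \<Rightarrow> real" where
  "cum_reward m h T = (\<Sum>t\<in>{1..T}. reward m h t)"

definition regret :: "(nat \<Rightarrow> real) \<Rightarrow> nat pmf \<Rightarrow> nat \<Rightarrow> (hist \<Rightarrow> nat) \<Rightarrow> nat \<Rightarrow> real" where
  "regret \<theta> Dl m pol T =
     measure_pmf.expectation (hist_pmf \<theta> Dl (\<lambda>_. 1) T) (\<lambda>h. cum_reward m h T)
     - measure_pmf.expectation (hist_pmf \<theta> Dl pol T) (\<lambda>h. cum_reward m h T)"

end

theory Submission
  imports Defs
begin

text \<open>
  The observation of round s that is revealed by time T has mean
  \<open>\<theta>(A_s) \<tau>(min(T - s, m))\<close> whatever the policy (a martingale argument), so the
  regret is at most \<open>\<tau>(m) \<Sum>_k \<Delta>_k E[N_k(T + 1)]\<close>. Fix a margin \<open>\<delta> > 0\<close>.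
  Once a suboptimal arm k has been pulled \<open>n \<ge> \<beta>(T) / (2 ((\<Delta>_k - 2\<delta>) \<tau>(m))\<^sup>2) + O(m)\<close>
  times, DelayedUCB pulls it again only if the centred observations of its first
  n pulls exceed about \<open>\<delta> \<tau>(m) n\<close>, or if the index of arm 1 is below
  \<open>\<theta>_1 - \<delta>\<close>. An exponential supermartingale for sums stopped after n pulls
  (Hoeffding's lemma for the censored Bernoulli observations) bounds the first
  event by a geometric term in n and the second by \<open>exp(-\<beta>(t)) = t^-(1+\<epsilon>)\<close>
  times a geometric term; both are summable. Censoring only affects the last m
  rounds and costs O(m). Hence \<open>E[N_k(T + 1)] \<le> \<beta>(T) / (2 ((\<Delta>_k - 2\<delta>) \<tau>(m))\<^sup>2) + O(1)\<close>,
  and letting \<open>\<delta> \<rightarrow> 0\<close> gives the constant of the theorem.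
\<close>

lemma integrable_pmf_bounded:
  fixes f :: "'a \<Rightarrow> real"
  assumes "\<And>x. x \<in> set_pmf M \<Longrightarrow> \<bar>f x\<bar> \<le> B"
  shows "integrable (measure_pmf M) f"
  by (rule measure_pmf.integrable_const_bound[where B=B]) (use assms in \<open>auto simp: AE_measure_pmf_iff\<close>)

lemma expectation_bind_pmf_bounded:
  fixes f :: "'b \<Rightarrow> real"
  assumes "\<And>x. x \<in> set_pmf (bind_pmf M N) \<Longrightarrow> \<bar>f x\<bar> \<le> B"
  shows "measure_pmf.expectation (bind_pmf M N) f =
    measure_pmf.expectation M (\<lambda>x. measure_pmf.expectation (N x) f)"
proof -
  define g where "g = (\<lambda>x. if x \<in> set_pmf (bind_pmf M N) then f x else 0)"
  have g_bound: "\<bar>g x\<bar> \<le> max B 0" for x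
    using assms[of x] by (auto simp: g_def intro: max.coboundedI1)
  have "measure_pmf.expectation (bind_pmf M N) g =
      measure_pmf.expectation M (\<lambda>x. measure_pmf.expectation (N x) g)"
    unfolding measure_pmf_bind
    by (rule integral_bind[where K="count_space UNIV" and B="max B 0" and B'=1])
      (use g_bound measure_pmf_in_subprob_algebra in \<open>auto simp: measure_pmf.emeasure_space_1 measure_subprob\<close>)
  moreover have "measure_pmf.expectation (bind_pmf M N) f = measure_pmf.expectation (bind_pmf M N) g"
    by (intro integral_cong_AE) (auto simp: g_def AE_measure_pmf_iff)
  moreover have "measure_pmf.expectation M (\<lambda>x. measure_pmf.expectation (N x) f) =
      measure_pmf.expectation M (\<lambda>x. measure_pmf.expectation (N x) g)"
    by (intro integral_cong_AE) (auto simp: g_def AE_measure_pmf_iff intro!: integral_cong_AE)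
  ultimately show ?thesis by simp
qed

lemma expectation_pmf_mono:
  fixes f g :: "'a \<Rightarrow> real"
  assumes "\<And>x. x \<in> set_pmf M \<Longrightarrow> \<bar>f x\<bar> \<le> B" "\<And>x. x \<in> set_pmf M \<Longrightarrow> \<bar>g x\<bar> \<le> B'"
    and "\<And>x. x \<in> set_pmf M \<Longrightarrow> f x \<le> g x"
  shows "measure_pmf.expectation M f \<le> measure_pmf.expectation M g"
  by (rule integral_mono_AE) (use assms in \<open>auto simp: AE_measure_pmf_iff intro: integrable_pmf_bounded\<close>)

lemma expectation_of_bool_eq_prob:
  "measure_pmf.expectation M (\<lambda>x. of_bool (P x) :: real) = measure_pmf.prob M {x. P x}"
proof -
  have "(\<lambda>x. of_bool (P x) :: real) = indicator {x. P x}" by (auto simp: indicator_def)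
  then show ?thesis by simp
qed

lemma set_pmf_hist_pmfD:
  assumes "h \<in> set_pmf (hist_pmf \<theta> Dl pol n)"
  shows "length h = n" and "\<And>s. s \<in> {1..n} \<Longrightarrow> arm h s = pol (take (s - 1) h)"
proof -
  have "length h = n \<and> (\<forall>s\<in>{1..n}. arm h s = pol (take (s - 1) h))"
    using assms
  proof (induction n arbitrary: h)
    case (Suc n)
    then obtain h0 c d where h: "h = h0 @ [(pol h0, c, d)]" "h0 \<in> set_pmf (hist_pmf \<theta> Dl pol n)"
      by auto
    with Suc.IH have "length h0 = n" "\<forall>s\<in>{1..n}. arm h0 s = pol (take (s - 1) h0)" by auto
    with h show ?case by (auto simp: arm_def nth_append le_Suc_eq)
  qed simp
  then show "length h = n" and "\<And>s. s \<in> {1..n} \<Longrightarrow> arm h s = pol (take (s - 1) h)" by auto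
qed

lemma expectation_hist_pmf_Suc:
  fixes f :: "hist \<Rightarrow> real"
  assumes "\<And>h. h \<in> set_pmf (hist_pmf \<theta> Dl pol (Suc n)) \<Longrightarrow> \<bar>f h\<bar> \<le> B"
  shows "measure_pmf.expectation (hist_pmf \<theta> Dl pol (Suc n)) f =
    measure_pmf.expectation (hist_pmf \<theta> Dl pol n) (\<lambda>h.
      measure_pmf.expectation (bernoulli_pmf (\<theta> (pol h))) (\<lambda>c.
        measure_pmf.expectation Dl (\<lambda>d. f (h @ [(pol h, c, d)]))))"
proof -
  have inner: "measure_pmf.expectation (bernoulli_pmf (\<theta> (pol h)) \<bind>
        (\<lambda>c. Dl \<bind> (\<lambda>d. return_pmf (h @ [(pol h, c, d)])))) f =
      measure_pmf.expectation (bernoulli_pmf (\<theta> (pol h))) (\<lambda>c.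
        measure_pmf.expectation Dl (\<lambda>d. f (h @ [(pol h, c, d)])))"
    if h: "h \<in> set_pmf (hist_pmf \<theta> Dl pol n)" for h
  proof -
    have "measure_pmf.expectation (bernoulli_pmf (\<theta> (pol h)) \<bind>
          (\<lambda>c. Dl \<bind> (\<lambda>d. return_pmf (h @ [(pol h, c, d)])))) f =
        measure_pmf.expectation (bernoulli_pmf (\<theta> (pol h))) (\<lambda>c.
          measure_pmf.expectation (Dl \<bind> (\<lambda>d. return_pmf (h @ [(pol h, c, d)]))) f)"
      by (rule expectation_bind_pmf_bounded[where B=B]) (use h assms in auto)
    also have "\<dots> = measure_pmf.expectation (bernoulli_pmf (\<theta> (pol h))) (\<lambda>c.
        measure_pmf.expectation Dl (\<lambda>d. f (h @ [(pol h, c, d)])))"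
    proof (intro integral_cong_AE, simp, simp, unfold AE_measure_pmf_iff, intro ballI)
      fix c assume c: "c \<in> set_pmf (bernoulli_pmf (\<theta> (pol h)))"
      show "measure_pmf.expectation (Dl \<bind> (\<lambda>d. return_pmf (h @ [(pol h, c, d)]))) f =
          measure_pmf.expectation Dl (\<lambda>d. f (h @ [(pol h, c, d)]))"
        by (subst expectation_bind_pmf_bounded[where B=B]) (use h c assms in auto)
    qed
    finally show ?thesis .
  qed
  have "measure_pmf.expectation (hist_pmf \<theta> Dl pol (Suc n)) f =
      measure_pmf.expectation (hist_pmf \<theta> Dl pol n) (\<lambda>h. measure_pmf.expectation
        (bernoulli_pmf (\<theta> (pol h)) \<bind> (\<lambda>c. Dl \<bind> (\<lambda>d. return_pmf (h @ [(pol h, c, d)])))) f)"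
    using assms by (simp only: hist_pmf.simps) (rule expectation_bind_pmf_bounded)
  also have "\<dots> = measure_pmf.expectation (hist_pmf \<theta> Dl pol n) (\<lambda>h.
      measure_pmf.expectation (bernoulli_pmf (\<theta> (pol h))) (\<lambda>c.
        measure_pmf.expectation Dl (\<lambda>d. f (h @ [(pol h, c, d)]))))"
    by (intro integral_cong_AE) (auto simp: AE_measure_pmf_iff inner)
  finally show ?thesis .
qed

lemma arm_snoc: "s \<in> {1..length h} \<Longrightarrow> arm (h @ [x]) s = arm h s"
  by (auto simp: arm_def nth_append)

lemma conv_snoc: "s \<in> {1..length h} \<Longrightarrow> conv (h @ [x]) s = conv h s"
  by (auto simp: conv_def nth_append)

lemma dly_snoc: "s \<in> {1..length h} \<Longrightarrow> dly (h @ [x]) s = dly h s"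
  by (auto simp: dly_def nth_append)

lemma snoc_last_round:
  "arm (h @ [(a, c, d)]) (Suc (length h)) = a"
  "conv (h @ [(a, c, d)]) (Suc (length h)) = c"
  "dly (h @ [(a, c, d)]) (Suc (length h)) = d"
  by (auto simp: arm_def conv_def dly_def)

lemma arm_take: "1 \<le> s \<Longrightarrow> s \<le> n \<Longrightarrow> arm (take n h) s = arm h s"
  by (auto simp: arm_def)

lemma conv_take: "1 \<le> s \<Longrightarrow> s \<le> n \<Longrightarrow> conv (take n h) s = conv h s"
  by (auto simp: conv_def)

lemma dly_take: "1 \<le> s \<Longrightarrow> s \<le> n \<Longrightarrow> dly (take n h) s = dly h s"
  by (auto simp: dly_def)

section \<open>Delayed Bernoulli observations\<close>

lemma hoeffding_two_point:
  fixes q l :: real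
  assumes "0 \<le> q" "q \<le> 1"
  shows "q * exp (l * (1 - q)) + (1 - q) * exp (- l * q) \<le> exp (l\<^sup>2 / 8)"
proof -
  have main: "p * exp (l * (1 - p)) + (1 - p) * exp (- l * p) \<le> exp (l\<^sup>2 / 8)"
    if p: "0 \<le> p" "p \<le> 1" and l: "0 \<le> l" for p l :: real
  proof -
    have pos: "1 + p * (exp l - 1) > 0"
      using p l by (smt (verit) exp_ge_zero mult_nonneg_nonneg one_le_exp_iff)
    have "exp (- l * p + ln (1 + p * (exp l - 1))) \<le> exp (l\<^sup>2 / 8)"
      using Hoeffdings_lemma_aux[of l p] p l by simp
    also have "exp (- l * p + ln (1 + p * (exp l - 1))) = exp (- l * p) * (1 + p * (exp l - 1))"
      using pos by (simp add: exp_add exp_diff exp_minus divide_inverse mult.commute)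
    also have "\<dots> = p * exp (l * (1 - p)) + (1 - p) * exp (- l * p)"
      by (simp add: algebra_simps exp_diff[symmetric] exp_add[symmetric])
    finally show ?thesis by simp
  qed
  show ?thesis
  proof (cases "l \<ge> 0")
    case False
    \<comment> \<open>swap the roles of the two points\<close>
    with main[of "1 - q" "- l"] assms show ?thesis by (simp add: algebra_simps)
  qed (use main assms in auto)
qed

lemma tau_nonneg: "0 \<le> tau Dl d"
  by (simp add: tau_def)

lemma tau_le_1: "tau Dl d \<le> 1"
  by (simp add: tau_def)

lemma tau_mono: "d \<le> d' \<Longrightarrow> tau Dl d \<le> tau Dl d'"
  unfolding tau_def by (intro measure_pmf.finite_measure_mono) auto

lemma expectation_if_delay_le:
  fixes a b :: real
  shows "measure_pmf.expectation Dl (\<lambda>d. if d \<le> D then a else b) = a * tau Dl D + b * (1 - tau Dl D)"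
proof -
  have "(\<lambda>d. if d \<le> D then a else b) = (\<lambda>d. b + (a - b) * indicator {..D} d)"
    by (auto simp: indicator_def fun_eq_iff)
  moreover have "integrable (measure_pmf Dl) (indicator {..D} :: nat \<Rightarrow> real)"
    by (rule integrable_pmf_bounded[where B=1]) (auto simp: indicator_def)
  ultimately show ?thesis by (simp add: tau_def algebra_simps)
qed

lemma delayed_bernoulli_mgf_le:
  assumes p: "0 \<le> p" "p \<le> 1"
  shows "measure_pmf.expectation (bernoulli_pmf p) (\<lambda>c. measure_pmf.expectation Dl
           (\<lambda>d. exp (l * (of_bool (c \<and> d \<le> D) - p * tau Dl D)))) \<le> exp (l\<^sup>2 / 8)"
proof -
  let ?t = "tau Dl D"
  have "(\<lambda>d. exp (l * (of_bool (d \<le> D) - p * ?t))) =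
      (\<lambda>d. if d \<le> D then exp (l * (1 - p * ?t)) else exp (l * (0 - p * ?t)))"
    by (auto simp: fun_eq_iff)
  then have "measure_pmf.expectation (bernoulli_pmf p) (\<lambda>c. measure_pmf.expectation Dl
           (\<lambda>d. exp (l * (of_bool (c \<and> d \<le> D) - p * ?t)))) =
     (exp (l * (1 - p * ?t)) * ?t + exp (l * (0 - p * ?t)) * (1 - ?t)) * p + exp (l * (0 - p * ?t)) * (1 - p)"
    using p by (simp add: expectation_if_delay_le)
  also have "\<dots> = (p * ?t) * exp (l * (1 - p * ?t)) + (1 - p * ?t) * exp (- l * (p * ?t))"
    by (simp add: algebra_simps)
  also have "\<dots> \<le> exp (l\<^sup>2 / 8)"
    by (rule hoeffding_two_point) (use p tau_nonneg[of Dl D] tau_le_1[of Dl D] in \<open>auto intro: mult_le_one\<close>)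
  finally show ?thesis .
qed

lemma delayed_bernoulli_mean:
  assumes "0 \<le> p" "p \<le> 1"
  shows "measure_pmf.expectation (bernoulli_pmf p) (\<lambda>c. measure_pmf.expectation Dl
           (\<lambda>d. of_bool (c \<and> d \<le> D) :: real)) = p * tau Dl D"
proof -
  have "(\<lambda>d. of_bool (d \<le> D) :: real) = (\<lambda>d. if d \<le> D then 1 else 0)"
    by auto
  then show ?thesis using assms by (simp add: expectation_if_delay_le)
qed

section \<open>Stopped sums over the first pulls of an arm\<close>

definition pulls :: "hist \<Rightarrow> nat \<Rightarrow> nat \<Rightarrow> nat" where
  "pulls h k t = card {s \<in> {1..t-1}. arm h s = k}"

lemma pulls_snoc: "s \<le> Suc (length h) \<Longrightarrow> pulls (h @ [x]) k s = pulls h k s"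
  unfolding pulls_def by (intro arg_cong[where f=card]) (auto simp: arm_snoc)

lemma pulls_mono: "s \<le> s' \<Longrightarrow> pulls h k s \<le> pulls h k s'"
  unfolding pulls_def by (intro card_mono) auto

lemma pulls_less:
  assumes "s < s'" "1 \<le> s" "arm h s = k"
  shows "pulls h k s < pulls h k s'"
proof -
  have "{x \<in> {1..s-1}. arm h x = k} \<subseteq> {x \<in> {1..s'-1}. arm h x = k}"
    using assms by auto
  moreover have "s \<in> {x \<in> {1..s'-1}. arm h x = k}" "s \<notin> {x \<in> {1..s-1}. arm h x = k}"
    using assms by auto
  ultimately have "{x \<in> {1..s-1}. arm h x = k} \<subset> {x \<in> {1..s'-1}. arm h x = k}"
    by blast
  then show ?thesis unfolding pulls_def by (intro psubset_card_mono) auto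
qed

lemma inj_on_pulls: "inj_on (pulls h k) {s. 1 \<le> s \<and> arm h s = k}"
  by (intro inj_onI) (metis (mono_tags) mem_Collect_eq linorder_neqE_nat pulls_less less_irrefl)

lemma pulls_le: "pulls h k t \<le> t - 1"
proof -
  have "pulls h k t \<le> card {1..t-1}" unfolding pulls_def by (intro card_mono) auto
  then show ?thesis by simp
qed

lemma pulls_pos:
  assumes "1 \<le> s" "s < t" "arm h s = k"
  shows "1 \<le> pulls h k t"
proof -
  have "s \<in> {x \<in> {1..t-1}. arm h x = k}" using assms by auto
  then have "card {x \<in> {1..t-1}. arm h x = k} > 0" by (auto simp: card_gt_0_iff)
  then show ?thesis unfolding pulls_def by simp
qed

text \<open>
  Round s is observed up to delay \<open>d s\<close>. Restricting the sum to the first n pulls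
  of arm k makes it a stopped martingale, whatever the policy.
\<close>

definition first_pulls_dev ::
    "(nat \<Rightarrow> real) \<Rightarrow> nat pmf \<Rightarrow> nat \<Rightarrow> nat \<Rightarrow> (nat \<Rightarrow> nat) \<Rightarrow> hist \<Rightarrow> real" where
  "first_pulls_dev \<theta> Dl k n d h = (\<Sum>s\<in>{1..length h}. if arm h s = k \<and> pulls h k s < n
      then of_bool (conv h s \<and> dly h s \<le> d s) - \<theta> k * tau Dl (d s) else 0)"

definition first_pulls_count :: "nat \<Rightarrow> nat \<Rightarrow> hist \<Rightarrow> real" where
  "first_pulls_count k n h = real (card {s \<in> {1..length h}. arm h s = k \<and> pulls h k s < n})"

definition hoeffding_supermart ::
    "(nat \<Rightarrow> real) \<Rightarrow> nat pmf \<Rightarrow> nat \<Rightarrow> nat \<Rightarrow> (nat \<Rightarrow> nat) \<Rightarrow> real \<Rightarrow> hist \<Rightarrow> real" where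
  "hoeffding_supermart \<theta> Dl k n d l h =
     exp (l * first_pulls_dev \<theta> Dl k n d h - l\<^sup>2 / 8 * first_pulls_count k n h)"

lemma abs_of_bool_minus_le_1: "0 \<le> x \<Longrightarrow> x \<le> 1 \<Longrightarrow> \<bar>of_bool b - x\<bar> \<le> (1 :: real)"
  by auto

lemma abs_first_pulls_dev_le:
  assumes "0 \<le> \<theta> k" "\<theta> k \<le> 1"
  shows "\<bar>first_pulls_dev \<theta> Dl k n d h\<bar> \<le> length h"
proof -
  have "0 \<le> \<theta> k * tau Dl (d s) \<and> \<theta> k * tau Dl (d s) \<le> 1" for s
    using assms tau_nonneg[of Dl "d s"] tau_le_1[of Dl "d s"] by (auto intro: mult_le_one)
  then have "\<bar>first_pulls_dev \<theta> Dl k n d h\<bar> \<le> (\<Sum>s\<in>{1..length h}. 1)"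
    unfolding first_pulls_dev_def
    by (intro order.trans[OF sum_abs] sum_mono) (simp add: abs_of_bool_minus_le_1)
  then show ?thesis by simp
qed

lemma first_pulls_count_le: "first_pulls_count k n h \<le> n"
proof -
  have "card {s \<in> {1..length h}. arm h s = k \<and> pulls h k s < n} \<le> card {..<n}"
    by (rule card_inj_on_le[where f="pulls h k"]) (auto intro: inj_on_subset[OF inj_on_pulls])
  then show ?thesis by (simp add: first_pulls_count_def)
qed

lemma first_pulls_dev_snoc:
  "first_pulls_dev \<theta> Dl k n d (h @ [(a, c, e)]) = first_pulls_dev \<theta> Dl k n d h +
    (if a = k \<and> pulls h k (Suc (length h)) < n
     then of_bool (c \<and> e \<le> d (Suc (length h))) - \<theta> k * tau Dl (d (Suc (length h))) else 0)"
proof -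
  have "first_pulls_dev \<theta> Dl k n d h = (\<Sum>s\<in>{1..length h}.
      if arm (h @ [(a, c, e)]) s = k \<and> pulls (h @ [(a, c, e)]) k s < n
      then of_bool (conv (h @ [(a, c, e)]) s \<and> dly (h @ [(a, c, e)]) s \<le> d s) - \<theta> k * tau Dl (d s)
      else 0)"
    unfolding first_pulls_dev_def
    by (intro sum.cong refl) (auto simp: arm_snoc conv_snoc dly_snoc pulls_snoc)
  then show ?thesis
    unfolding first_pulls_dev_def by (simp add: sum.cl_ivl_Suc snoc_last_round pulls_snoc)
qed

lemma first_pulls_count_snoc:
  "first_pulls_count k n (h @ [(a, c, e)]) =
    first_pulls_count k n h + of_bool (a = k \<and> pulls h k (Suc (length h)) < n)"
proof -
  have "{s \<in> {1..length (h @ [(a, c, e)])}. arm (h @ [(a, c, e)]) s = k \<and> pulls (h @ [(a, c, e)]) k s < n} =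
      {s \<in> {1..length h}. arm h s = k \<and> pulls h k s < n} \<union>
      (if a = k \<and> pulls h k (Suc (length h)) < n then {Suc (length h)} else {})"
    by (auto simp: le_Suc_eq arm_snoc pulls_snoc snoc_last_round)
  then show ?thesis by (simp add: first_pulls_count_def)
qed

lemma hoeffding_supermart_le:
  assumes "0 \<le> \<theta> k" "\<theta> k \<le> 1"
  shows "hoeffding_supermart \<theta> Dl k n d l h \<le> exp (\<bar>l\<bar> * length h)"
proof -
  have "l * first_pulls_dev \<theta> Dl k n d h \<le> \<bar>l\<bar> * \<bar>first_pulls_dev \<theta> Dl k n d h\<bar>"
    by (metis abs_ge_self abs_mult)
  also have "\<dots> \<le> \<bar>l\<bar> * length h"
    using abs_first_pulls_dev_le[of \<theta> k, OF assms] by (intro mult_left_mono) auto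
  finally have "l * first_pulls_dev \<theta> Dl k n d h \<le> \<bar>l\<bar> * length h" .
  moreover have "0 \<le> l\<^sup>2 / 8 * first_pulls_count k n h"
    by (simp add: first_pulls_count_def)
  ultimately show ?thesis
    unfolding hoeffding_supermart_def by simp
qed

lemma hoeffding_supermart_step:
  assumes "0 \<le> \<theta> k" "\<theta> k \<le> 1"
  shows "measure_pmf.expectation (bernoulli_pmf (\<theta> (pol h))) (\<lambda>c. measure_pmf.expectation Dl
           (\<lambda>e. hoeffding_supermart \<theta> Dl k n d l (h @ [(pol h, c, e)])))
         \<le> hoeffding_supermart \<theta> Dl k n d l h"
proof (cases "pol h = k \<and> pulls h k (Suc (length h)) < n")
  case True
  define D where "D = d (Suc (length h))"
  let ?S = "hoeffding_supermart \<theta> Dl k n d l h"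
  have "hoeffding_supermart \<theta> Dl k n d l (h @ [(pol h, c, e)]) =
      ?S * exp (- (l\<^sup>2 / 8)) * exp (l * (of_bool (c \<and> e \<le> D) - \<theta> k * tau Dl D))" for c e
    using True unfolding hoeffding_supermart_def first_pulls_dev_snoc first_pulls_count_snoc D_def
    by (simp add: exp_add[symmetric] algebra_simps)
  then have "measure_pmf.expectation (bernoulli_pmf (\<theta> (pol h))) (\<lambda>c. measure_pmf.expectation Dl
        (\<lambda>e. hoeffding_supermart \<theta> Dl k n d l (h @ [(pol h, c, e)]))) =
      ?S * exp (- (l\<^sup>2 / 8)) * measure_pmf.expectation (bernoulli_pmf (\<theta> k)) (\<lambda>c.
        measure_pmf.expectation Dl (\<lambda>e. exp (l * (of_bool (c \<and> e \<le> D) - \<theta> k * tau Dl D))))"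
    using True by simp
  also have "\<dots> \<le> ?S * exp (- (l\<^sup>2 / 8)) * exp (l\<^sup>2 / 8)"
    by (intro mult_left_mono delayed_bernoulli_mgf_le assms) (auto simp: hoeffding_supermart_def)
  also have "\<dots> = ?S"
    by (simp add: mult.assoc exp_add[symmetric])
  finally show ?thesis .
next
  case False
  then have "hoeffding_supermart \<theta> Dl k n d l (h @ [(pol h, c, e)]) = hoeffding_supermart \<theta> Dl k n d l h"
    for c e
    using False by (auto simp: hoeffding_supermart_def first_pulls_dev_snoc first_pulls_count_snoc)
  then show ?thesis by simp
qed

lemma expectation_hoeffding_supermart_le_1:
  assumes "0 \<le> \<theta> k" "\<theta> k \<le> 1"
  shows "measure_pmf.expectation (hist_pmf \<theta> Dl pol j) (hoeffding_supermart \<theta> Dl k n d l) \<le> 1"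
proof (induction j)
  case 0
  then show ?case
    by (simp add: hoeffding_supermart_def first_pulls_dev_def first_pulls_count_def)
next
  case (Suc j)
  let ?S = "hoeffding_supermart \<theta> Dl k n d l"
  let ?next = "\<lambda>h. measure_pmf.expectation (bernoulli_pmf (\<theta> (pol h))) (\<lambda>c.
      measure_pmf.expectation Dl (\<lambda>e. ?S (h @ [(pol h, c, e)])))"
  have S_nonneg: "0 \<le> ?S h" for h
    by (simp add: hoeffding_supermart_def)
  have step: "?next h \<le> ?S h" for h
    by (rule hoeffding_supermart_step) (use assms in auto)
  have "measure_pmf.expectation (hist_pmf \<theta> Dl pol (Suc j)) ?S =
      measure_pmf.expectation (hist_pmf \<theta> Dl pol j) ?next"
    by (rule expectation_hist_pmf_Suc[where B="exp (\<bar>l\<bar> * Suc j)"])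
      (use S_nonneg hoeffding_supermart_le[of \<theta> k, OF assms] set_pmf_hist_pmfD in \<open>metis abs_of_nonneg\<close>)
  also have "\<dots> \<le> measure_pmf.expectation (hist_pmf \<theta> Dl pol j) ?S"
  proof (rule expectation_pmf_mono[where B="exp (\<bar>l\<bar> * j)" and B'="exp (\<bar>l\<bar> * j)"])
    fix h assume h: "h \<in> set_pmf (hist_pmf \<theta> Dl pol j)"
    show "\<bar>?S h\<bar> \<le> exp (\<bar>l\<bar> * j)"
      using hoeffding_supermart_le[of \<theta> k, OF assms] S_nonneg set_pmf_hist_pmfD(1)[OF h] by (metis abs_of_nonneg)
    moreover have "0 \<le> ?next h"
      by (intro integral_nonneg_AE AE_I2) (simp add: hoeffding_supermart_def)
    ultimately show "\<bar>?next h\<bar> \<le> exp (\<bar>l\<bar> * j)"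
      using step[of h] by linarith
  qed (rule step)
  also have "\<dots> \<le> 1" by (rule Suc.IH)
  finally show ?case .
qed

lemma prob_le_by_hoeffding_supermart:
  assumes "0 \<le> \<theta> k" "\<theta> k \<le> 1" "0 \<le> c"
    and "\<And>h. P h \<Longrightarrow> 1 \<le> hoeffding_supermart \<theta> Dl k n d l h * c"
  shows "measure_pmf.prob (hist_pmf \<theta> Dl pol j) {h. P h} \<le> c"
proof -
  let ?M = "hist_pmf \<theta> Dl pol j"
  have bound: "\<bar>hoeffding_supermart \<theta> Dl k n d l h * c\<bar> \<le> exp (\<bar>l\<bar> * j) * c"
    if "h \<in> set_pmf ?M" for h
    using hoeffding_supermart_le[of \<theta> k, OF assms(1,2), of Dl n d l h] set_pmf_hist_pmfD(1)[OF that] assms(3)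
    by (simp add: abs_mult hoeffding_supermart_def mult_right_mono)
  have "measure_pmf.prob ?M {h. P h} = measure_pmf.expectation ?M (\<lambda>h. of_bool (P h))"
    by (simp add: expectation_of_bool_eq_prob)
  also have "\<dots> \<le> measure_pmf.expectation ?M (\<lambda>h. hoeffding_supermart \<theta> Dl k n d l h * c)"
    by (rule expectation_pmf_mono[where B=1 and B'="exp (\<bar>l\<bar> * j) * c"])
      (use bound assms(3,4) in \<open>auto simp: hoeffding_supermart_def\<close>)
  also have "\<dots> = measure_pmf.expectation ?M (hoeffding_supermart \<theta> Dl k n d l) * c"
    by simp
  also have "\<dots> \<le> 1 * c"
    by (intro mult_right_mono expectation_hoeffding_supermart_le_1) (use assms in auto)
  finally show ?thesis by simp
qed

lemma first_pulls_dev_upper_tail: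
  assumes "0 \<le> \<theta> k" "\<theta> k \<le> 1" "0 \<le> a"
  shows "measure_pmf.prob (hist_pmf \<theta> Dl pol j) {h. a \<le> first_pulls_dev \<theta> Dl k n d h}
    \<le> exp (- 2 * a\<^sup>2 / n)"
proof (cases "n = 0")
  case False
  define l where "l = 4 * a / n"
  show ?thesis
  proof (rule prob_le_by_hoeffding_supermart[of \<theta> k, OF assms(1,2), where l=l])
    fix h assume dev: "a \<le> first_pulls_dev \<theta> Dl k n d h"
    have "0 \<le> l * (first_pulls_dev \<theta> Dl k n d h - a) + l\<^sup>2 / 8 * (n - first_pulls_count k n h)"
      using dev assms(3) first_pulls_count_le[of k n h]
      by (intro add_nonneg_nonneg mult_nonneg_nonneg) (auto simp: l_def)
    also have "\<dots> = (l * first_pulls_dev \<theta> Dl k n d h - l\<^sup>2 / 8 * first_pulls_count k n h) + (- 2 * a\<^sup>2 / n)"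
      using False by (simp add: l_def power2_eq_square field_simps)
    finally show "1 \<le> hoeffding_supermart \<theta> Dl k n d l h * exp (- 2 * a\<^sup>2 / n)"
      by (simp add: hoeffding_supermart_def exp_add[symmetric])
  qed simp
qed simp

lemma first_pulls_dev_lower_tail:
  assumes "0 \<le> \<theta> k" "\<theta> k \<le> 1" "0 \<le> a"
  shows "measure_pmf.prob (hist_pmf \<theta> Dl pol j) {h. first_pulls_dev \<theta> Dl k n d h \<le> - a}
    \<le> exp (- 2 * a\<^sup>2 / n)"
proof (cases "n = 0")
  case False
  define l where "l = - 4 * a / n"
  show ?thesis
  proof (rule prob_le_by_hoeffding_supermart[of \<theta> k, OF assms(1,2), where l=l])
    fix h assume dev: "first_pulls_dev \<theta> Dl k n d h \<le> - a"
    have "0 \<le> (- l) * (- a - first_pulls_dev \<theta> Dl k n d h) + l\<^sup>2 / 8 * (n - first_pulls_count k n h)"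
      using dev assms(3) first_pulls_count_le[of k n h]
      by (intro add_nonneg_nonneg mult_nonneg_nonneg) (auto simp: l_def)
    also have "\<dots> = (l * first_pulls_dev \<theta> Dl k n d h - l\<^sup>2 / 8 * first_pulls_count k n h) + (- 2 * a\<^sup>2 / n)"
      using False by (simp add: l_def power2_eq_square field_simps)
    finally show "1 \<le> hoeffding_supermart \<theta> Dl k n d l h * exp (- 2 * a\<^sup>2 / n)"
      by (simp add: hoeffding_supermart_def exp_add[symmetric])
  qed simp
qed simp

section \<open>The estimators as sums over past rounds\<close>

lemma Nk_eq_pulls: "Nk h k t = real (pulls h k t)"
  by (simp add: Nk_def pulls_def)

lemma Sk_eq_sum:
  "Sk m h k t = (\<Sum>s\<in>{1..t-1}. if arm h s = k then of_bool (conv h s \<and> dly h s \<le> min (t - s) m) else 0)"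
proof -
  have "{s \<in> {1..t-1}. arm h s = k \<and> conv h s \<and> dly h s \<le> min (t - s) m} =
      {1..t-1} \<inter> {s. arm h s = k \<and> conv h s \<and> dly h s \<le> min (t - s) m}"
    by auto
  then show ?thesis unfolding Sk_def by (simp add: sum.If_cases Int_def)
qed

lemma Ntil_eq_sum:
  assumes "1 \<le> m"
  shows "Ntil Dl m h k t = (\<Sum>s\<in>{1..t-1}. if arm h s = k then tau Dl (min (t - s) m) else 0)"
proof -
  have settled: "tau Dl m * real (card {s \<in> {1..t-m}. arm h s = k}) =
      (\<Sum>s\<in>{1..t-m}. if arm h s = k then tau Dl (min (t - s) m) else 0)"
  proof -
    have "{s \<in> {1..t-m}. arm h s = k} = {1..t-m} \<inter> {s. arm h s = k}" by auto
    moreover have "(\<Sum>s\<in>{1..t-m}. if arm h s = k then tau Dl (min (t - s) m) else 0) =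
        (\<Sum>s\<in>{1..t-m}. if arm h s = k then tau Dl m else 0)"
      by (intro sum.cong refl) auto
    ultimately show ?thesis by (simp add: sum.If_cases Int_def)
  qed
  have recent: "(\<Sum>s\<in>{t-m+1..t-1}. if arm h s = k then tau Dl (t - s) else 0) =
      (\<Sum>s\<in>{t-m+1..t-1}. if arm h s = k then tau Dl (min (t - s) m) else 0)"
    by (intro sum.cong refl) auto
  have "{1..t-1} = {1..t-m} \<union> {t-m+1..t-1}" using assms by auto
  then show ?thesis
    unfolding Ntil_def settled recent by (simp add: sum.union_disjoint[symmetric] ivl_disj_int)
qed

lemma card_recent_rounds_le: "card {s \<in> {1..t-1}. t < s + m} \<le> m - 1"
proof -
  have "card {s \<in> {1..t-1}. t < s + m} \<le> card {t+1-m..<t}" by (intro card_mono) auto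
  then show ?thesis by simp
qed

lemma pulls_le_settled_pulls: "pulls h k t \<le> card {s \<in> {1..t-1}. arm h s = k \<and> s + m \<le> t} + (m - 1)"
proof -
  have "pulls h k t \<le> card ({s \<in> {1..t-1}. arm h s = k \<and> s + m \<le> t} \<union> {s \<in> {1..t-1}. t < s + m})"
    unfolding pulls_def by (intro card_mono) auto
  also have "\<dots> \<le> card {s \<in> {1..t-1}. arm h s = k \<and> s + m \<le> t} + card {s \<in> {1..t-1}. t < s + m}"
    by (rule card_Un_le)
  finally show ?thesis using card_recent_rounds_le[of t m] by linarith
qed

lemma Ntil_ge_settled_pulls:
  assumes "1 \<le> m"
  shows "tau Dl m * card {s \<in> {1..t-1}. arm h s = k \<and> s + m \<le> t} \<le> Ntil Dl m h k t"
proof -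
  have "{s \<in> {1..t-1}. arm h s = k \<and> s + m \<le> t} = {1..t-1} \<inter> {s. arm h s = k \<and> s + m \<le> t}" by auto
  then have "tau Dl m * card {s \<in> {1..t-1}. arm h s = k \<and> s + m \<le> t} =
      (\<Sum>s\<in>{1..t-1}. if arm h s = k \<and> s + m \<le> t then tau Dl m else 0)"
    by (simp add: sum.If_cases Int_def)
  also have "\<dots> \<le> Ntil Dl m h k t"
    unfolding Ntil_eq_sum[OF assms] by (intro sum_mono) (auto simp: tau_nonneg)
  finally show ?thesis .
qed

lemma Ntil_ge_pulls:
  assumes "1 \<le> m"
  shows "tau Dl m * (real (pulls h k t) - (real m - 1)) \<le> Ntil Dl m h k t"
proof -
  have "real (pulls h k t) - (real m - 1) \<le> card {s \<in> {1..t-1}. arm h s = k \<and> s + m \<le> t}"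
    using pulls_le_settled_pulls[of h k t m] assms by linarith
  then show ?thesis
    using Ntil_ge_settled_pulls[OF assms, where Dl=Dl and t=t and h=h and k=k] by (smt (verit) mult_left_mono tau_nonneg)
qed

lemma Ntil_pos:
  assumes "1 \<le> m" "tau Dl m > 0" "1 \<le> s" "s + m \<le> t" "arm h s = k"
  shows "Ntil Dl m h k t > 0"
proof -
  have "s \<in> {s \<in> {1..t-1}. arm h s = k \<and> s + m \<le> t}" using assms by auto
  then have "0 < card {s \<in> {1..t-1}. arm h s = k \<and> s + m \<le> t}" by (auto simp: card_gt_0_iff)
  then show ?thesis using Ntil_ge_settled_pulls[OF assms(1), where Dl=Dl and t=t and h=h and k=k] assms(2)
    by (smt (verit) of_nat_0_less_iff mult_pos_pos)
qed

lemma ucb_eq: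
  assumes "Ntil Dl m h k t > 0" "0 \<le> beta t"
  shows "ucb Dl m beta h k t = (Sk m h k t + sqrt (real (pulls h k t) * beta t / 2)) / Ntil Dl m h k t"
proof -
  define N where "N = real (pulls h k t)"
  define D where "D = Ntil Dl m h k t"
  have "sqrt (N / D) * sqrt (beta t / (2 * D)) = sqrt ((N * beta t / 2) / D\<^sup>2)"
    by (simp add: real_sqrt_mult[symmetric] power2_eq_square field_simps)
  also have "\<dots> = sqrt (N * beta t / 2) / D"
    using assms by (simp add: real_sqrt_divide D_def real_sqrt_mult)
  finally show ?thesis
    unfolding ucb_def theta_hat_def Nk_eq_pulls N_def[symmetric] D_def[symmetric]
    by (simp add: add_divide_distrib)
qed

lemma ucb_take:
  assumes "1 \<le> m"
  shows "ucb Dl m beta (take (t - 1) h) k t = ucb Dl m beta h k t"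
proof -
  have "Nk (take (t - 1) h) k t = Nk h k t"
    unfolding Nk_def by (intro arg_cong[where f="\<lambda>x. real (card x)"]) (auto simp: arm_take)
  moreover have "Sk m (take (t - 1) h) k t = Sk m h k t"
    unfolding Sk_def by (intro arg_cong[where f="\<lambda>x. real (card x)"]) (auto simp: arm_take conv_take dly_take)
  moreover have "Ntil Dl m (take (t - 1) h) k t = Ntil Dl m h k t"
    unfolding Ntil_eq_sum[OF assms] by (intro sum.cong refl) (auto simp: arm_take)
  ultimately show ?thesis by (simp add: ucb_def theta_hat_def)
qed

lemma first_pulls_dev_eq_sum_before:
  assumes "t - 1 \<le> length h"
  shows "first_pulls_dev \<theta> Dl k (pulls h k t) d h =
    (\<Sum>s\<in>{1..t-1}. if arm h s = k then of_bool (conv h s \<and> dly h s \<le> d s) - \<theta> k * tau Dl (d s) else 0)"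
proof -
  let ?f = "\<lambda>s. if arm h s = k then of_bool (conv h s \<and> dly h s \<le> d s) - \<theta> k * tau Dl (d s) else 0"
  have "first_pulls_dev \<theta> Dl k (pulls h k t) d h = (\<Sum>s\<in>{1..length h}. if s \<in> {1..t-1} then ?f s else 0)"
    unfolding first_pulls_dev_def
  proof (intro sum.cong refl)
    fix s assume s: "s \<in> {1..length h}"
    show "(if arm h s = k \<and> pulls h k s < pulls h k t
        then of_bool (conv h s \<and> dly h s \<le> d s) - \<theta> k * tau Dl (d s) else 0) =
      (if s \<in> {1..t-1} then ?f s else 0)"
    proof (cases "s \<le> t - 1")
      case True
      then have "arm h s = k \<Longrightarrow> pulls h k s < pulls h k t" using s by (intro pulls_less) auto
      with True s show ?thesis by auto
    next
      case False
      then have "pulls h k t \<le> pulls h k s" by (intro pulls_mono) auto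
      with False show ?thesis by auto
    qed
  qed
  also have "\<dots> = (\<Sum>s\<in>{1..length h} \<inter> {1..t-1}. ?f s)"
    by (rule sum.inter_restrict[symmetric]) simp
  also have "{1..length h} \<inter> {1..t-1} = {1..t-1}"
    using assms by auto
  finally show ?thesis .
qed

lemma first_pulls_dev_eq_Sk_minus_mean:
  assumes "1 \<le> m" "t - 1 \<le> length h"
  shows "first_pulls_dev \<theta> Dl k (pulls h k t) (\<lambda>s. min (t - s) m) h = Sk m h k t - \<theta> k * Ntil Dl m h k t"
  unfolding first_pulls_dev_eq_sum_before[OF assms(2)] Sk_eq_sum Ntil_eq_sum[OF assms(1)]
    sum_distrib_left sum_subtractf[symmetric]
  by (intro sum.cong refl) auto

text \<open>Censoring at the current round affects only the last \<open>m - 1\<close> rounds.\<close>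

lemma first_pulls_dev_censored_ge:
  assumes "1 \<le> m" "t - 1 \<le> length h" "0 \<le> \<theta> k" "\<theta> k \<le> 1"
  shows "first_pulls_dev \<theta> Dl k (pulls h k t) (\<lambda>s. min (t - s) m) h - (real m - 1)
    \<le> first_pulls_dev \<theta> Dl k (pulls h k t) (\<lambda>_. m) h"
proof -
  let ?d = "\<lambda>s. if arm h s = k then of_bool (conv h s \<and> dly h s \<le> m) - \<theta> k * tau Dl m else 0"
  let ?w = "\<lambda>s. if arm h s = k then of_bool (conv h s \<and> dly h s \<le> min (t - s) m) - \<theta> k * tau Dl (min (t - s) m) else 0"
  have "- real (card {s \<in> {1..t-1}. t < s + m}) = (\<Sum>s\<in>{1..t-1}. - of_bool (t < s + m))"
    by (simp add: sum_negf Int_def)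
  also have "\<dots> \<le> (\<Sum>s\<in>{1..t-1}. ?d s - ?w s)"
  proof (intro sum_mono)
    fix s
    have "\<theta> k * tau Dl m - \<theta> k * tau Dl (min (t - s) m) \<le> 1"
      using assms tau_nonneg[of Dl "min (t - s) m"] tau_le_1[of Dl m]
      by (smt (verit) mult_left_le mult_nonneg_nonneg)
    then show "- of_bool (t < s + m) \<le> ?d s - ?w s"
      by (cases "t < s + m") auto
  qed
  also have "\<dots> = first_pulls_dev \<theta> Dl k (pulls h k t) (\<lambda>_. m) h -
      first_pulls_dev \<theta> Dl k (pulls h k t) (\<lambda>s. min (t - s) m) h"
    unfolding first_pulls_dev_eq_sum_before[OF assms(2)] by (simp add: sum_subtractf)
  finally show ?thesis using card_recent_rounds_le[of t m] assms(1) by linarith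
qed

section \<open>Behaviour of DelayedUCB\<close>

lemma sqrt_exploration_le:
  fixes \<gamma> a b n :: real
  assumes "0 < \<gamma>" "0 \<le> a" "0 \<le> b" "b / (2 * \<gamma>\<^sup>2) + 2 * a \<le> n"
  shows "sqrt (n * b / 2) \<le> \<gamma> * (n - a)"
proof -
  have n: "0 \<le> n" "0 \<le> n - a" using assms by (smt (verit) divide_nonneg_pos zero_less_power)+
  have "b / 2 \<le> \<gamma>\<^sup>2 * (n - 2 * a)"
    using assms by (simp add: field_simps)
  then have "n * (b / 2) \<le> n * (\<gamma>\<^sup>2 * (n - 2 * a))"
    by (rule mult_left_mono[OF _ n(1)])
  then have "n * b / 2 \<le> \<gamma>\<^sup>2 * (n * (n - 2 * a))"
    by (simp add: algebra_simps)
  also have "\<dots> \<le> \<gamma>\<^sup>2 * (n - a)\<^sup>2"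
    by (intro mult_left_mono) (auto simp: power2_eq_square algebra_simps)
  also have "\<dots> = (\<gamma> * (n - a))\<^sup>2"
    by (simp add: power_mult_distrib)
  finally show ?thesis
    using assms(1) n by (intro real_le_lsqrt) auto
qed

text \<open>
  The deterministic core: the optimal arm (\<open>opt\<close>) does not have a too small index,
  yet the suboptimal arm (\<open>sub\<close>), pulled n times, has the larger index. Here
  \<open>S\<close>, \<open>N\<close>, \<open>W\<close>, \<open>b\<close> stand for \<open>S_j(t)\<close>, \<open>Ntil_j(t)\<close>, the stopped deviation sums,
  \<open>\<beta>(t)\<close>, and \<open>a = m - 1\<close>.
\<close>

lemma ucb_comparison_forces_deviation:
  fixes Nopt Nsub \<delta> \<tau> \<theta>opt \<theta>sub b bT Wopt Wsub Sopt Ssub nopt n a :: real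
  assumes pos: "0 < Nopt" "0 < Nsub" "0 < \<delta>" "0 < \<tau>" "2 * \<delta> < \<theta>opt - \<theta>sub" "0 \<le> b" "b \<le> bT" "0 \<le> a"
    and S: "Sopt = Wopt + \<theta>opt * Nopt" "Ssub = Wsub + \<theta>sub * Nsub"
    and N: "\<tau> * (nopt - a) \<le> Nopt" "\<tau> * (n - a) \<le> Nsub"
    and Wopt: "- (sqrt (nopt * b / 2) + \<delta> * \<tau> * max 0 (nopt - a)) < Wopt"
    and ucb: "(Sopt + sqrt (nopt * b / 2)) / Nopt \<le> (Ssub + sqrt (n * b / 2)) / Nsub"
    and n: "bT / (2 * ((\<theta>opt - \<theta>sub - 2 * \<delta>) * \<tau>)\<^sup>2) + 2 * a \<le> n"
  shows "\<delta> * \<tau> * (n - a) \<le> Wsub"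
proof (rule ccontr)
  assume small: "\<not> ?thesis"
  define \<gamma> where "\<gamma> = (\<theta>opt - \<theta>sub - 2 * \<delta>) * \<tau>"
  have \<gamma>: "0 < \<gamma>" using pos by (simp add: \<gamma>_def)
  have "\<delta> * \<tau> * max 0 (nopt - a) \<le> \<delta> * Nopt"
    using N(1) pos by (auto simp: max_def mult.assoc intro: mult_left_mono)
  then have "(\<theta>opt - \<delta>) * Nopt < Sopt + sqrt (nopt * b / 2)"
    using Wopt S(1) by (simp add: algebra_simps)
  then have "\<theta>opt - \<delta> < (Sopt + sqrt (nopt * b / 2)) / Nopt"
    using pos by (simp add: field_simps)
  then have "\<theta>opt - \<delta> < (Ssub + sqrt (n * b / 2)) / Nsub"
    using ucb by linarith
  then have "(\<theta>opt - \<delta>) * Nsub < Ssub + sqrt (n * b / 2)"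
    using pos by (simp add: field_simps)
  moreover have "\<delta> * \<tau> * (n - a) \<le> \<delta> * Nsub"
    using N(2) pos by (simp add: mult.assoc mult_left_mono)
  moreover have "\<gamma> * (n - a) \<le> (\<theta>opt - \<theta>sub - 2 * \<delta>) * Nsub"
    unfolding \<gamma>_def using N(2) pos by (simp add: mult.assoc mult_left_mono)
  ultimately have "\<gamma> * (n - a) < sqrt (n * b / 2)"
    using S(2) small by (simp add: algebra_simps)
  moreover have "sqrt (n * b / 2) \<le> sqrt (n * bT / 2)"
  proof -
    have "0 \<le> n" using n pos \<gamma> unfolding \<gamma>_def by (smt (verit) divide_nonneg_pos zero_less_power)
    then show ?thesis using pos by (intro real_sqrt_le_mono mult_left_mono divide_right_mono) auto
  qed
  moreover have "sqrt (n * bT / 2) \<le> \<gamma> * (n - a)"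
    using pos n \<gamma> unfolding \<gamma>_def by (intro sqrt_exploration_le) auto
  ultimately show False by linarith
qed

lemma delayed_ucb_arm_range: "is_delayed_ucb K Dl m beta pol \<Longrightarrow> pol h \<in> {1..K}"
  unfolding is_delayed_ucb_def by (metis DiffD1 not_le)

lemma delayed_ucb_index_max:
  assumes pol: "is_delayed_ucb K Dl m beta pol" and m: "1 \<le> m"
    and h: "h \<in> set_pmf (hist_pmf \<theta> Dl pol T)" and t: "K < t" "t \<le> T" and j: "j \<in> {1..K}"
  shows "ucb Dl m beta h j t \<le> ucb Dl m beta h (arm h t) t"
proof -
  let ?h = "take (t - 1) h"
  have len: "length h = T" "length ?h = t - 1" "K \<le> length ?h"
    using set_pmf_hist_pmfD(1)[OF h] t by auto
  have "ucb Dl m beta ?h j (length ?h + 1) \<le> ucb Dl m beta ?h (pol ?h) (length ?h + 1)"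
    using pol len(3) j unfolding is_delayed_ucb_def by blast
  moreover have "length ?h + 1 = t" "arm h t = pol ?h"
    using len t set_pmf_hist_pmfD(2)[OF h, of t] by auto
  ultimately show ?thesis using ucb_take[OF m, where t=t and h=h] by simp
qed

lemma delayed_ucb_initial_arms:
  assumes pol: "is_delayed_ucb K Dl m beta pol"
    and h: "h \<in> set_pmf (hist_pmf \<theta> Dl pol T)" and "i \<le> K" "K \<le> T"
  shows "distinct (map fst (take i h)) \<and> set (map fst (take i h)) \<subseteq> {1..K}"
  using assms(3)
proof (induction i)
  case (Suc i)
  have "take (Suc i) h = take i h @ [h ! i]"
    using Suc.prems assms(4) set_pmf_hist_pmfD(1)[OF h] by (simp add: take_Suc_conv_app_nth)
  moreover have "fst (h ! i) = pol (take i h)"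
    using set_pmf_hist_pmfD(2)[OF h, of "Suc i"] Suc.prems assms(4) by (simp add: arm_def)
  moreover have "pol (take i h) \<in> {1..K} - set (map fst (take i h))"
    using pol Suc.prems unfolding is_delayed_ucb_def by (simp add: min_less_iff_disj)
  ultimately show ?case using Suc by auto
qed simp

lemma delayed_ucb_initial_rounds:
  assumes pol: "is_delayed_ucb K Dl m beta pol"
    and h: "h \<in> set_pmf (hist_pmf \<theta> Dl pol T)" and T: "K \<le> T" and j: "j \<in> {1..K}"
  shows "\<exists>s\<in>{1..K}. arm h s = j"
proof -
  have len: "length (map fst (take K h)) = K"
    using set_pmf_hist_pmfD(1)[OF h] T by simp
  have arms: "distinct (map fst (take K h))" "set (map fst (take K h)) \<subseteq> {1..K}"
    using delayed_ucb_initial_arms[OF pol h order.refl T] by auto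
  then have "card (set (map fst (take K h))) = card {1..K}"
    using distinct_card[OF arms(1)] len by simp
  then have "set (map fst (take K h)) = {1..K}"
    using arms(2) by (intro card_subset_eq) auto
  then have "j \<in> set (map fst (take K h))"
    using j by blast
  then obtain i where "i < K" "map fst (take K h) ! i = j"
    using len by (metis in_set_conv_nth)
  then show ?thesis
    using len by (intro bexI[of _ "Suc i"]) (auto simp: arm_def)
qed

section \<open>Counting the pulls of a suboptimal arm\<close>

text \<open>
  The two bad events, for \<open>c = \<delta> \<tau>(m)\<close>: the first n pulls of arm k overestimate
  its mean, and, at round t after n pulls of arm 1, the index of arm 1 is below
  \<open>\<theta>_1 - \<delta>\<close>.
\<close>

definition overestimate_event ::
    "(nat \<Rightarrow> real) \<Rightarrow> nat pmf \<Rightarrow> nat \<Rightarrow> real \<Rightarrow> nat \<Rightarrow> nat \<Rightarrow> hist \<Rightarrow> bool" where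
  "overestimate_event \<theta> Dl m c k n h \<longleftrightarrow>
     c * (real n - (real m - 1)) - (real m - 1) \<le> first_pulls_dev \<theta> Dl k n (\<lambda>_. m) h"

definition underestimate_event ::
    "(nat \<Rightarrow> real) \<Rightarrow> nat pmf \<Rightarrow> nat \<Rightarrow> (nat \<Rightarrow> real) \<Rightarrow> real \<Rightarrow> nat \<Rightarrow> nat \<Rightarrow> hist \<Rightarrow> bool" where
  "underestimate_event \<theta> Dl m beta c n t h \<longleftrightarrow>
     first_pulls_dev \<theta> Dl 1 n (\<lambda>s. min (t - s) m) h
       \<le> - (sqrt (real n * beta t / 2) + c * max 0 (real n - (real m - 1)))"

lemma card_pulls_with_count_le:
  "card {s \<in> {1..T}. arm h s = k \<and> Q (pulls h k s)} \<le> card {n \<in> {..<T}. Q n}"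
proof (rule card_inj_on_le)
  show "inj_on (pulls h k) {s \<in> {1..T}. arm h s = k \<and> Q (pulls h k s)}"
    by (rule inj_on_subset[OF inj_on_pulls]) auto
  show "pulls h k ` {s \<in> {1..T}. arm h s = k \<and> Q (pulls h k s)} \<subseteq> {n \<in> {..<T}. Q n}"
  proof
    fix n assume "n \<in> pulls h k ` {s \<in> {1..T}. arm h s = k \<and> Q (pulls h k s)}"
    then obtain s where "s \<in> {1..T}" "Q (pulls h k s)" "n = pulls h k s" by auto
    moreover have "pulls h k s \<le> s - 1" by (rule pulls_le)
    ultimately show "n \<in> {n \<in> {..<T}. Q n}" by auto
  qed
qed simp

lemma card_few_pulls_le:
  assumes "0 \<le> L"
  shows "real (card {s \<in> {1..T}. arm h s = k \<and> real (pulls h k s) < L}) \<le> L + 1"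
proof -
  have "card {s \<in> {1..T}. arm h s = k \<and> real (pulls h k s) < L} \<le> card {n \<in> {..<T}. real n < L}"
    by (rule card_pulls_with_count_le)
  also have "\<dots> \<le> card {..<nat \<lceil>L\<rceil>}"
    by (intro card_mono) (auto simp: less_ceiling_iff zless_nat_eq_int_zless)
  finally have "real (card {s \<in> {1..T}. arm h s = k \<and> real (pulls h k s) < L}) \<le> real (nat \<lceil>L\<rceil>)"
    by simp
  also have "\<dots> \<le> L + 1"
    using assms by (simp add: of_int_ceiling_le_add_one)
  finally show ?thesis .
qed

lemma card_rounds_with_count_le:
  "real (card {t \<in> {1..T}. 1 \<le> pulls h k t \<and> Q (pulls h k t) t})
    \<le> (\<Sum>t=1..T. \<Sum>n=1..T. of_bool (Q n t))"
proof -
  have "real (card {t \<in> {1..T}. 1 \<le> pulls h k t \<and> Q (pulls h k t) t}) =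
      (\<Sum>t=1..T. of_bool (1 \<le> pulls h k t \<and> Q (pulls h k t) t))"
    by (simp add: Int_def)
  also have "\<dots> \<le> (\<Sum>t=1..T. \<Sum>n=1..T. of_bool (Q n t))"
  proof (intro sum_mono)
    fix t assume t: "t \<in> {1..T}"
    show "of_bool (1 \<le> pulls h k t \<and> Q (pulls h k t) t) \<le> (\<Sum>n=1..T. of_bool (Q n t) :: real)"
    proof (cases "1 \<le> pulls h k t \<and> Q (pulls h k t) t")
      case True
      then have "pulls h k t \<in> {1..T}" using pulls_le[of h k t] t by auto
      then have "of_bool (Q (pulls h k t) t) \<le> (\<Sum>n=1..T. of_bool (Q n t) :: real)"
        by (intro member_le_sum) auto
      then show ?thesis using True by (simp del: sum_of_bool_eq)
    next
      case False
      then have "of_bool (1 \<le> pulls h k t \<and> Q (pulls h k t) t) = (0 :: real)" by simp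
      moreover have "0 \<le> (\<Sum>n=1..T. of_bool (Q n t) :: real)" by (rule sum_nonneg) simp
      ultimately show ?thesis by linarith
    qed
  qed
  finally show ?thesis .
qed

locale delayed_ucb_run =
  fixes K m :: nat and Dl :: "nat pmf" and beta :: "nat \<Rightarrow> real" and pol :: "hist \<Rightarrow> nat"
    and \<theta> :: "nat \<Rightarrow> real"
  assumes K_pos: "1 \<le> K" and m_pos: "1 \<le> m" and tau_pos: "0 < tau Dl m"
    and theta_range: "\<And>k. k \<in> {1..K} \<Longrightarrow> 0 \<le> \<theta> k \<and> \<theta> k \<le> 1"
    and beta_nonneg: "\<And>t. 0 \<le> beta t" and beta_mono: "\<And>t t'. t \<le> t' \<Longrightarrow> beta t \<le> beta t'"
    and delayed_ucb: "is_delayed_ucb K Dl m beta pol"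
begin

lemma suboptimal_pull_overestimates:
  assumes h: "h \<in> set_pmf (hist_pmf \<theta> Dl pol T)" and k: "k \<in> {2..K}"
    and \<delta>: "0 < \<delta>" "2 * \<delta> < \<theta> 1 - \<theta> k"
    and t: "K + m < t" "t \<le> T" "arm h t = k"
    and many: "beta T / (2 * ((\<theta> 1 - \<theta> k - 2 * \<delta>) * tau Dl m)\<^sup>2) + 2 * (real m - 1) \<le> real (pulls h k t)"
    and arm1: "\<not> underestimate_event \<theta> Dl m beta (\<delta> * tau Dl m) (pulls h 1 t) t h"
  shows "overestimate_event \<theta> Dl m (\<delta> * tau Dl m) k (pulls h k t) h"
proof -
  have KT: "K \<le> T" and len: "t - 1 \<le> length h"
    using t set_pmf_hist_pmfD(1)[OF h] by auto
  obtain s1 where s1: "s1 \<in> {1..K}" "arm h s1 = 1"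
    using delayed_ucb_initial_rounds[OF delayed_ucb h KT, of 1] K_pos by auto
  obtain sk where sk: "sk \<in> {1..K}" "arm h sk = k"
    using delayed_ucb_initial_rounds[OF delayed_ucb h KT, of k] k by auto
  have N1: "0 < Ntil Dl m h 1 t"
    by (rule Ntil_pos[OF m_pos tau_pos, of s1]) (use s1 t in auto)
  have Nk: "0 < Ntil Dl m h k t"
    by (rule Ntil_pos[OF m_pos tau_pos, of sk]) (use sk t in auto)
  have "ucb Dl m beta h 1 t \<le> ucb Dl m beta h (arm h t) t"
    by (rule delayed_ucb_index_max[OF delayed_ucb m_pos h]) (use t K_pos in auto)
  then have ucb: "(Sk m h 1 t + sqrt (real (pulls h 1 t) * beta t / 2)) / Ntil Dl m h 1 t \<le>
      (Sk m h k t + sqrt (real (pulls h k t) * beta t / 2)) / Ntil Dl m h k t"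
    using ucb_eq[OF N1 beta_nonneg] ucb_eq[OF Nk beta_nonneg] t by simp
  have "\<delta> * tau Dl m * (real (pulls h k t) - (real m - 1)) \<le>
      first_pulls_dev \<theta> Dl k (pulls h k t) (\<lambda>s. min (t - s) m) h"
  proof (rule ucb_comparison_forces_deviation[where Nopt="Ntil Dl m h 1 t" and Nsub="Ntil Dl m h k t"
        and \<theta>opt="\<theta> 1" and \<theta>sub="\<theta> k" and b="beta t" and bT="beta T" and Sopt="Sk m h 1 t" and Ssub="Sk m h k t"
        and Wopt="first_pulls_dev \<theta> Dl 1 (pulls h 1 t) (\<lambda>s. min (t - s) m) h" and nopt="real (pulls h 1 t)"])
    show "0 < Ntil Dl m h 1 t" "0 < Ntil Dl m h k t" "0 < \<delta>" "0 < tau Dl m" "2 * \<delta> < \<theta> 1 - \<theta> k"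
      "0 \<le> beta t" "beta t \<le> beta T" "0 \<le> real m - 1"
      using N1 Nk \<delta> tau_pos beta_nonneg beta_mono[of t T] t m_pos by auto
    show "Sk m h 1 t = first_pulls_dev \<theta> Dl 1 (pulls h 1 t) (\<lambda>s. min (t - s) m) h + \<theta> 1 * Ntil Dl m h 1 t"
      "Sk m h k t = first_pulls_dev \<theta> Dl k (pulls h k t) (\<lambda>s. min (t - s) m) h + \<theta> k * Ntil Dl m h k t"
      using first_pulls_dev_eq_Sk_minus_mean[OF m_pos len] by simp_all
    show "tau Dl m * (real (pulls h 1 t) - (real m - 1)) \<le> Ntil Dl m h 1 t"
      "tau Dl m * (real (pulls h k t) - (real m - 1)) \<le> Ntil Dl m h k t"
      by (rule Ntil_ge_pulls[OF m_pos])+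
    show "- (sqrt (real (pulls h 1 t) * beta t / 2) + \<delta> * tau Dl m * max 0 (real (pulls h 1 t) - (real m - 1)))
        < first_pulls_dev \<theta> Dl 1 (pulls h 1 t) (\<lambda>s. min (t - s) m) h"
      using arm1 by (simp add: underestimate_event_def)
  qed (use ucb many in auto)
  moreover have thk: "0 \<le> \<theta> k" "\<theta> k \<le> 1"
    using theta_range[of k] k by auto
  ultimately show ?thesis
    using first_pulls_dev_censored_ge[where \<theta>=\<theta> and k=k and Dl=Dl, OF m_pos len thk]
    by (simp add: overestimate_event_def)
qed

lemma suboptimal_pulls_le:
  assumes h: "h \<in> set_pmf (hist_pmf \<theta> Dl pol T)" and k: "k \<in> {2..K}"
    and \<delta>: "0 < \<delta>" "2 * \<delta> < \<theta> 1 - \<theta> k"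
  defines "L \<equiv> beta T / (2 * ((\<theta> 1 - \<theta> k - 2 * \<delta>) * tau Dl m)\<^sup>2) + 2 * (real m - 1)"
  shows "real (pulls h k (Suc T)) \<le> real (K + m) + (L + 1)
     + (\<Sum>n<T. of_bool (overestimate_event \<theta> Dl m (\<delta> * tau Dl m) k n h))
     + (\<Sum>t=1..T. \<Sum>n=1..T. of_bool (underestimate_event \<theta> Dl m beta (\<delta> * tau Dl m) n t h))"
proof -
  let ?over = "\<lambda>n. overestimate_event \<theta> Dl m (\<delta> * tau Dl m) k n h"
  let ?under = "\<lambda>n t. underestimate_event \<theta> Dl m beta (\<delta> * tau Dl m) n t h"
  define P_few where "P_few = {s \<in> {1..T}. arm h s = k \<and> real (pulls h k s) < L}"
  define P_over where "P_over = {s \<in> {1..T}. arm h s = k \<and> ?over (pulls h k s)}"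
  define P_under where "P_under = {t \<in> {1..T}. 1 \<le> pulls h 1 t \<and> ?under (pulls h 1 t) t}"
  have "{s \<in> {1..T}. arm h s = k} \<subseteq> {1..K + m} \<union> P_few \<union> P_over \<union> P_under"
  proof
    fix t assume t: "t \<in> {s \<in> {1..T}. arm h s = k}"
    show "t \<in> {1..K + m} \<union> P_few \<union> P_over \<union> P_under"
    proof (rule ccontr)
      assume out: "t \<notin> {1..K + m} \<union> P_few \<union> P_over \<union> P_under"
      then have late: "K + m < t" "t \<le> T" "arm h t = k" using t by auto
      obtain s1 where "s1 \<in> {1..K}" "arm h s1 = 1"
        using delayed_ucb_initial_rounds[OF delayed_ucb h, of 1] late K_pos by auto
      then have "1 \<le> pulls h 1 t" using late by (intro pulls_pos[of s1]) auto
      then have "?over (pulls h k t)"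
        using out late by (intro suboptimal_pull_overestimates[OF h k \<delta>])
          (auto simp: P_few_def P_under_def L_def not_less)
      then show False using out late by (auto simp: P_over_def)
    qed
  qed
  then have "card {s \<in> {1..T}. arm h s = k} \<le> card ({1..K + m} \<union> P_few \<union> P_over \<union> P_under)"
    by (intro card_mono) (auto simp: P_few_def P_over_def P_under_def)
  also have "\<dots> \<le> card {1..K + m} + card P_few + card P_over + card P_under"
    by (meson card_Un_le add_le_mono le_refl order_trans)
  finally have "real (pulls h k (Suc T)) \<le> real (K + m) + card P_few + card P_over + card P_under"
    by (simp add: pulls_def)
  moreover have "real (card P_few) \<le> L + 1"
    unfolding P_few_def using beta_nonneg[of T] m_pos by (intro card_few_pulls_le) (simp add: L_def)
  moreover have "real (card P_over) \<le> (\<Sum>n<T. of_bool (?over n))"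
  proof -
    have "card P_over \<le> card {n \<in> {..<T}. ?over n}"
      unfolding P_over_def by (rule card_pulls_with_count_le)
    then show ?thesis by (simp add: Int_def)
  qed
  moreover have "real (card P_under) \<le> (\<Sum>t=1..T. \<Sum>n=1..T. of_bool (?under n t))"
    unfolding P_under_def by (rule card_rounds_with_count_le)
  ultimately show ?thesis by linarith
qed

end

section \<open>Expected number of pulls of a suboptimal arm\<close>

lemma sum_power_le_geometric:
  fixes r :: real
  assumes "0 < r" "r < 1" "A \<subseteq> {..<N}"
  shows "(\<Sum>n\<in>A. r ^ n) \<le> 1 / (1 - r)"
proof -
  have "(\<Sum>n\<in>A. r ^ n) \<le> (\<Sum>n<N. r ^ n)"
    by (rule sum_mono2) (use assms in auto)
  also have "\<dots> = (1 - r ^ N) / (1 - r)"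
    using assms by (simp add: sum_gp_strict)
  also have "\<dots> \<le> 1 / (1 - r)"
    using assms by (intro divide_right_mono) auto
  finally show ?thesis .
qed

lemma prob_first_pulls_dev_ge_linear:
  assumes "0 \<le> \<theta> k" "\<theta> k \<le> 1" "0 \<le> c" "0 \<le> b"
  shows "measure_pmf.prob (hist_pmf \<theta> Dl pol j) {h. c * n - b \<le> first_pulls_dev \<theta> Dl k n d h}
     \<le> exp (4 * c * b) * exp (- 2 * c\<^sup>2) ^ n"
proof -
  have rhs: "exp (4 * c * b) * exp (- 2 * c\<^sup>2) ^ n = exp (- 2 * c\<^sup>2 * n + 4 * c * b)"
    by (simp add: exp_of_nat_mult[symmetric] exp_add[symmetric] algebra_simps)
  show ?thesis
  proof (cases "c * n - b \<le> 0")
    case True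
    then have "c * (c * n) \<le> c * b" using assms by (intro mult_left_mono) auto
    moreover have "0 \<le> c * b" using assms by simp
    moreover have "- 2 * c\<^sup>2 * n + 4 * c * b = - 2 * (c * (c * n)) + 4 * (c * b)"
      by (simp add: power2_eq_square)
    ultimately have "0 \<le> - 2 * c\<^sup>2 * n + 4 * c * b" by linarith
    then show ?thesis
      unfolding rhs by (meson measure_pmf.prob_le_1 one_le_exp_iff order_trans)
  next
    case False
    define a where "a = c * n - b"
    have "0 < a" "0 < real n"
      using False assms by (auto simp: a_def intro: ccontr)
    have "measure_pmf.prob (hist_pmf \<theta> Dl pol j) {h. a \<le> first_pulls_dev \<theta> Dl k n d h}
        \<le> exp (- 2 * a\<^sup>2 / n)"
      by (rule first_pulls_dev_upper_tail) (use assms \<open>0 < a\<close> in auto)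
    also have "\<dots> \<le> exp (- 2 * c\<^sup>2 * n + 4 * c * b)"
    proof -
      have "2 * a\<^sup>2 / n = 2 * c\<^sup>2 * n - 4 * c * b + 2 * b\<^sup>2 / n"
        using \<open>0 < real n\<close> by (simp add: a_def power2_eq_square field_simps)
      moreover have "0 \<le> 2 * b\<^sup>2 / n" by simp
      ultimately show ?thesis by simp
    qed
    finally show ?thesis unfolding rhs a_def .
  qed
qed

lemma prob_first_pulls_dev_le_exploration:
  assumes "0 \<le> \<theta> k" "\<theta> k \<le> 1" "0 \<le> c" "0 \<le> a" "1 \<le> n" "0 \<le> b"
  shows "measure_pmf.prob (hist_pmf \<theta> Dl pol j)
      {h. first_pulls_dev \<theta> Dl k n d h \<le> - (sqrt (real n * b / 2) + c * max 0 (real n - a))}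
     \<le> exp (- b) * (exp (4 * c\<^sup>2 * a) * exp (- 2 * c\<^sup>2) ^ n)"
proof -
  define M where "M = max 0 (real n - a)"
  define x where "x = sqrt (real n * b / 2) + c * M"
  have M: "0 \<le> M" "real n - 2 * a \<le> M\<^sup>2 / n"
  proof -
    show "0 \<le> M" by (simp add: M_def)
    have "n * (n - 2 * a) \<le> (n - a)\<^sup>2" by (simp add: power2_eq_square algebra_simps)
    then show "real n - 2 * a \<le> M\<^sup>2 / n"
      using assms by (cases "real n \<le> a") (auto simp: M_def pos_le_divide_eq mult.commute)
  qed
  have "real n * b / 2 + c\<^sup>2 * M\<^sup>2 \<le> x\<^sup>2"
  proof -
    have "0 \<le> 2 * sqrt (real n * b / 2) * (c * M)"
      using assms M by simp
    then show ?thesis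
      using assms by (simp add: x_def power2_sum power_mult_distrib)
  qed
  then have "2 * (real n * b / 2 + c\<^sup>2 * M\<^sup>2) / n \<le> 2 * x\<^sup>2 / n"
    by (intro divide_right_mono) auto
  moreover have "2 * (real n * b / 2 + c\<^sup>2 * M\<^sup>2) / n = b + 2 * c\<^sup>2 * (M\<^sup>2 / n)"
    using assms by (simp add: field_simps)
  moreover have "2 * c\<^sup>2 * (real n - 2 * a) \<le> 2 * c\<^sup>2 * (M\<^sup>2 / n)"
    using M by (intro mult_left_mono) auto
  ultimately have exponent: "b + 2 * c\<^sup>2 * (real n - 2 * a) \<le> 2 * x\<^sup>2 / n"
    by linarith
  have "measure_pmf.prob (hist_pmf \<theta> Dl pol j)
      {h. first_pulls_dev \<theta> Dl k n d h \<le> - (sqrt (real n * b / 2) + c * max 0 (real n - a))}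
      \<le> exp (- 2 * x\<^sup>2 / n)"
    unfolding M_def[symmetric] x_def[symmetric]
    by (rule first_pulls_dev_lower_tail) (use assms M in \<open>auto simp: x_def\<close>)
  also have "\<dots> \<le> exp (- b + (- 2 * c\<^sup>2 * n + 4 * c\<^sup>2 * a))"
    using exponent by (simp add: algebra_simps)
  also have "\<dots> = exp (- b) * (exp (4 * c\<^sup>2 * a) * exp (- 2 * c\<^sup>2) ^ n)"
    by (simp add: exp_of_nat_mult[symmetric] exp_add[symmetric] algebra_simps)
  finally show ?thesis .
qed

context delayed_ucb_run
begin

lemma sum_prob_overestimate_le:
  assumes "k \<in> {1..K}" "0 < c"
  shows "(\<Sum>n<T. measure_pmf.prob (hist_pmf \<theta> Dl pol j) {h. overestimate_event \<theta> Dl m c k n h})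
    \<le> exp (4 * c * (c * (real m - 1) + (real m - 1))) / (1 - exp (- 2 * c\<^sup>2))"
proof -
  let ?b = "c * (real m - 1) + (real m - 1)" and ?r = "exp (- 2 * c\<^sup>2)"
  have "(\<Sum>n<T. measure_pmf.prob (hist_pmf \<theta> Dl pol j) {h. overestimate_event \<theta> Dl m c k n h})
      \<le> (\<Sum>n<T. exp (4 * c * ?b) * ?r ^ n)"
  proof (intro sum_mono)
    fix n
    have "{h. overestimate_event \<theta> Dl m c k n h} = {h. c * n - ?b \<le> first_pulls_dev \<theta> Dl k n (\<lambda>_. m) h}"
      by (simp add: overestimate_event_def algebra_simps)
    moreover have "measure_pmf.prob (hist_pmf \<theta> Dl pol j)
        {h. c * n - ?b \<le> first_pulls_dev \<theta> Dl k n (\<lambda>_. m) h} \<le> exp (4 * c * ?b) * ?r ^ n"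
      using theta_range[OF assms(1)] assms(2) m_pos by (intro prob_first_pulls_dev_ge_linear) auto
    ultimately show "measure_pmf.prob (hist_pmf \<theta> Dl pol j) {h. overestimate_event \<theta> Dl m c k n h}
        \<le> exp (4 * c * ?b) * ?r ^ n"
      by simp
  qed
  also have "\<dots> = exp (4 * c * ?b) * (\<Sum>n<T. ?r ^ n)"
    by (simp add: sum_distrib_left)
  also have "\<dots> \<le> exp (4 * c * ?b) * (1 / (1 - ?r))"
    using assms(2) by (intro mult_left_mono sum_power_le_geometric) auto
  finally show ?thesis by simp
qed

lemma sum_prob_underestimate_le:
  assumes "0 < c" "\<And>T. (\<Sum>t=1..T. exp (- beta t)) \<le> Sb"
  shows "(\<Sum>t=1..T. \<Sum>n=1..T.
      measure_pmf.prob (hist_pmf \<theta> Dl pol j) {h. underestimate_event \<theta> Dl m beta c n t h})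
    \<le> exp (4 * c\<^sup>2 * (real m - 1)) / (1 - exp (- 2 * c\<^sup>2)) * Sb"
proof -
  let ?e = "exp (4 * c\<^sup>2 * (real m - 1))" and ?r = "exp (- 2 * c\<^sup>2)"
  have r: "0 < ?r" "?r < 1" using assms(1) by auto
  have "(\<Sum>t=1..T. \<Sum>n=1..T.
      measure_pmf.prob (hist_pmf \<theta> Dl pol j) {h. underestimate_event \<theta> Dl m beta c n t h})
      \<le> (\<Sum>t=1..T. \<Sum>n=1..T. exp (- beta t) * (?e * ?r ^ n))"
    unfolding underestimate_event_def
    using theta_range[of 1] K_pos assms(1) m_pos beta_nonneg
    by (intro sum_mono prob_first_pulls_dev_le_exploration) auto
  also have "\<dots> = (\<Sum>t=1..T. exp (- beta t) * ?e * (\<Sum>n=1..T. ?r ^ n))"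
    by (simp add: sum_distrib_left mult.assoc)
  also have "\<dots> \<le> (\<Sum>t=1..T. exp (- beta t) * ?e * (1 / (1 - ?r)))"
    by (intro sum_mono mult_left_mono sum_power_le_geometric[OF r, of _ "Suc T"]) auto
  also have "\<dots> = (\<Sum>t=1..T. exp (- beta t)) * (?e / (1 - ?r))"
    by (simp add: sum_distrib_right sum_divide_distrib)
  also have "\<dots> \<le> Sb * (?e / (1 - ?r))"
    using r by (intro mult_right_mono assms(2)) auto
  finally show ?thesis by (simp add: mult.commute)
qed

lemma expected_suboptimal_pulls_le:
  assumes k: "k \<in> {2..K}" and \<delta>: "0 < \<delta>" "2 * \<delta> < \<theta> 1 - \<theta> k"
    and Sb: "\<And>T. (\<Sum>t=1..T. exp (- beta t)) \<le> Sb"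
  defines "c \<equiv> \<delta> * tau Dl m"
  shows "measure_pmf.expectation (hist_pmf \<theta> Dl pol T) (\<lambda>h. real (pulls h k (Suc T))) \<le>
     beta T / (2 * ((\<theta> 1 - \<theta> k - 2 * \<delta>) * tau Dl m)\<^sup>2) + real (K + m) + 2 * (real m - 1) + 1
     + exp (4 * c * (c * (real m - 1) + (real m - 1))) / (1 - exp (- 2 * c\<^sup>2))
     + exp (4 * c\<^sup>2 * (real m - 1)) / (1 - exp (- 2 * c\<^sup>2)) * Sb"
proof -
  let ?M = "hist_pmf \<theta> Dl pol T"
  let ?over = "\<lambda>n h. of_bool (overestimate_event \<theta> Dl m c k n h) :: real"
  let ?under = "\<lambda>t n h. of_bool (underestimate_event \<theta> Dl m beta c n t h) :: real"
  define L where "L = beta T / (2 * ((\<theta> 1 - \<theta> k - 2 * \<delta>) * tau Dl m)\<^sup>2) + 2 * (real m - 1)"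
  define R where "R = (\<lambda>h. real (K + m) + (L + 1) + (\<Sum>n<T. ?over n h) + (\<Sum>t=1..T. \<Sum>n=1..T. ?under t n h))"
  have c: "0 < c" using \<delta> tau_pos by (simp add: c_def)
  have bool_integrable: "integrable (measure_pmf ?M) (\<lambda>h. of_bool (P h) :: real)" for P
    by (rule integrable_pmf_bounded[where B=1]) auto
  have "measure_pmf.expectation ?M (\<lambda>h. real (pulls h k (Suc T))) \<le> measure_pmf.expectation ?M R"
  proof (rule integral_mono_AE)
    show "integrable (measure_pmf ?M) (\<lambda>h. real (pulls h k (Suc T)))"
      by (rule integrable_pmf_bounded[where B="real T"]) (use pulls_le[of _ k "Suc T"] in auto)
    show "integrable (measure_pmf ?M) R"
      unfolding R_def by (auto intro!: Bochner_Integration.integrable_add integrable_sum bool_integrable simp del: sum_of_bool_eq)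
    show "AE h in measure_pmf ?M. real (pulls h k (Suc T)) \<le> R h"
      unfolding AE_measure_pmf_iff R_def L_def c_def using suboptimal_pulls_le[OF _ k \<delta>] by blast
  qed
  also have "measure_pmf.expectation ?M R = real (K + m) + (L + 1)
      + (\<Sum>n<T. measure_pmf.prob ?M {h. overestimate_event \<theta> Dl m c k n h})
      + (\<Sum>t=1..T. \<Sum>n=1..T. measure_pmf.prob ?M {h. underestimate_event \<theta> Dl m beta c n t h})"
    unfolding R_def
    by (simp add: integral_sum integrable_sum bool_integrable expectation_of_bool_eq_prob del: sum_of_bool_eq)
  also have "\<dots> \<le> real (K + m) + (L + 1)
      + exp (4 * c * (c * (real m - 1) + (real m - 1))) / (1 - exp (- 2 * c\<^sup>2))
      + exp (4 * c\<^sup>2 * (real m - 1)) / (1 - exp (- 2 * c\<^sup>2)) * Sb"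
    using sum_prob_overestimate_le[of k c T T] sum_prob_underestimate_le[OF c Sb, of T T] k c
    by (intro add_mono) auto
  finally show ?thesis by (simp add: L_def)
qed

end

section \<open>Expected reward and regret\<close>

definition obs_dev :: "(nat \<Rightarrow> real) \<Rightarrow> nat pmf \<Rightarrow> (nat \<Rightarrow> nat) \<Rightarrow> hist \<Rightarrow> real" where
  "obs_dev \<theta> Dl d h =
     (\<Sum>s\<in>{1..length h}. of_bool (conv h s \<and> dly h s \<le> d s) - \<theta> (arm h s) * tau Dl (d s))"

lemma abs_obs_dev_le:
  assumes "\<And>s. s \<in> {1..length h} \<Longrightarrow> 0 \<le> \<theta> (arm h s) \<and> \<theta> (arm h s) \<le> 1"
  shows "\<bar>obs_dev \<theta> Dl d h\<bar> \<le> length h"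
proof -
  have "0 \<le> \<theta> (arm h s) * tau Dl (d s) \<and> \<theta> (arm h s) * tau Dl (d s) \<le> 1" if "s \<in> {1..length h}" for s
    using assms[OF that] tau_nonneg[of Dl "d s"] tau_le_1[of Dl "d s"] by (auto intro: mult_le_one)
  then have "\<bar>obs_dev \<theta> Dl d h\<bar> \<le> (\<Sum>s\<in>{1..length h}. 1)"
    unfolding obs_dev_def by (intro order.trans[OF sum_abs] sum_mono) (simp add: abs_of_bool_minus_le_1)
  then show ?thesis by simp
qed

lemma obs_dev_snoc:
  "obs_dev \<theta> Dl d (h @ [(a, c, e)]) =
    obs_dev \<theta> Dl d h + (of_bool (c \<and> e \<le> d (Suc (length h))) - \<theta> a * tau Dl (d (Suc (length h))))"
proof -
  have "obs_dev \<theta> Dl d h = (\<Sum>s\<in>{1..length h}.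
      of_bool (conv (h @ [(a, c, e)]) s \<and> dly (h @ [(a, c, e)]) s \<le> d s) - \<theta> (arm (h @ [(a, c, e)]) s) * tau Dl (d s))"
    unfolding obs_dev_def by (intro sum.cong refl) (auto simp: arm_snoc conv_snoc dly_snoc)
  then show ?thesis
    unfolding obs_dev_def by (simp add: sum.cl_ivl_Suc snoc_last_round)
qed

lemma expectation_obs_dev_eq_0:
  assumes th: "\<And>h. 0 \<le> \<theta> (pol h) \<and> \<theta> (pol h) \<le> 1"
  shows "measure_pmf.expectation (hist_pmf \<theta> Dl pol j) (obs_dev \<theta> Dl d) = 0"
proof (induction j)
  case 0
  then show ?case by (simp add: obs_dev_def)
next
  case (Suc j)
  have "measure_pmf.expectation (hist_pmf \<theta> Dl pol (Suc j)) (obs_dev \<theta> Dl d) =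
    measure_pmf.expectation (hist_pmf \<theta> Dl pol j) (\<lambda>h.
      measure_pmf.expectation (bernoulli_pmf (\<theta> (pol h))) (\<lambda>c.
        measure_pmf.expectation Dl (\<lambda>e. obs_dev \<theta> Dl d (h @ [(pol h, c, e)]))))"
  proof (rule expectation_hist_pmf_Suc[where B="Suc j"])
    fix h assume h: "h \<in> set_pmf (hist_pmf \<theta> Dl pol (Suc j))"
    then show "\<bar>obs_dev \<theta> Dl d h\<bar> \<le> real (Suc j)"
      using abs_obs_dev_le[of h \<theta>] set_pmf_hist_pmfD[OF h] th by auto
  qed
  also have "\<dots> = measure_pmf.expectation (hist_pmf \<theta> Dl pol j) (obs_dev \<theta> Dl d)"
  proof (intro integral_cong_AE, simp, simp, unfold AE_measure_pmf_iff, intro ballI)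
    fix h assume "h \<in> set_pmf (hist_pmf \<theta> Dl pol j)"
    define D where "D = d (Suc (length h))"
    have "integrable (measure_pmf Dl) (\<lambda>e. of_bool (c \<and> e \<le> D) :: real)" for c
      by (rule integrable_pmf_bounded[where B=1]) auto
    then have "measure_pmf.expectation (bernoulli_pmf (\<theta> (pol h))) (\<lambda>c.
        measure_pmf.expectation Dl (\<lambda>e. obs_dev \<theta> Dl d (h @ [(pol h, c, e)]))) =
      obs_dev \<theta> Dl d h - \<theta> (pol h) * tau Dl D + measure_pmf.expectation (bernoulli_pmf (\<theta> (pol h)))
        (\<lambda>c. measure_pmf.expectation Dl (\<lambda>e. of_bool (c \<and> e \<le> D)))"
      using th[of h] unfolding obs_dev_snoc D_def[symmetric]
      by (simp add: Bochner_Integration.integral_add Bochner_Integration.integral_diff algebra_simps)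
    also have "\<dots> = obs_dev \<theta> Dl d h"
      using delayed_bernoulli_mean[of "\<theta> (pol h)" Dl D] th[of h] by simp
    finally show "measure_pmf.expectation (bernoulli_pmf (\<theta> (pol h))) (\<lambda>c.
        measure_pmf.expectation Dl (\<lambda>e. obs_dev \<theta> Dl d (h @ [(pol h, c, e)]))) = obs_dev \<theta> Dl d h" .
  qed
  finally show ?case using Suc.IH by simp
qed

lemma reward_eq_sum:
  "reward m h t = (\<Sum>s=1..t. of_bool (conv h s \<and> dly h s = t - s \<and> t - s \<le> m))"
proof -
  have "{max 1 (t - m)..t} = {1..t} \<inter> {s. t - s \<le> m}" by auto
  then have "reward m h t =
      (\<Sum>s=1..t. if s \<in> {s. t - s \<le> m} then (if conv h s \<and> dly h s = t - s then 1 else 0) else 0)"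
    unfolding reward_def by (simp only: sum.inter_restrict finite_atLeastAtMost)
  also have "\<dots> = (\<Sum>s=1..t. of_bool (conv h s \<and> dly h s = t - s \<and> t - s \<le> m))"
    by (intro sum.cong refl) auto
  finally show ?thesis .
qed

lemma cum_reward_eq_sum:
  "cum_reward m h T = (\<Sum>s=1..T. of_bool (conv h s \<and> dly h s \<le> min (T - s) m))"
proof (induction T)
  case 0
  then show ?case by (simp add: cum_reward_def)
next
  case (Suc T)
  let ?new = "\<lambda>s. of_bool (conv h s \<and> dly h s = Suc T - s \<and> Suc T - s \<le> m) :: real"
  have "(\<Sum>s=1..T. of_bool (conv h s \<and> dly h s \<le> min (Suc T - s) m) :: real) =
      (\<Sum>s=1..T. of_bool (conv h s \<and> dly h s \<le> min (T - s) m) + ?new s)"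
  proof (intro sum.cong refl)
    fix s assume "s \<in> {1..T}"
    then have "Suc T - s = Suc (T - s)" by auto
    then show "(of_bool (conv h s \<and> dly h s \<le> min (Suc T - s) m) :: real) =
        of_bool (conv h s \<and> dly h s \<le> min (T - s) m) + ?new s"
      by (auto simp: min_def)
  qed
  then have "(\<Sum>s=1..Suc T. of_bool (conv h s \<and> dly h s \<le> min (Suc T - s) m) :: real) =
      (\<Sum>s=1..T. of_bool (conv h s \<and> dly h s \<le> min (T - s) m)) + (\<Sum>s=1..Suc T. ?new s)"
    by (simp add: sum.cl_ivl_Suc sum.distrib del: sum_of_bool_eq)
  then show ?case
    using Suc.IH by (simp add: cum_reward_def sum.cl_ivl_Suc reward_eq_sum del: sum_of_bool_eq)
qed

lemma expected_cum_reward: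
  assumes th: "\<And>h. 0 \<le> \<theta> (pol h) \<and> \<theta> (pol h) \<le> 1"
  shows "measure_pmf.expectation (hist_pmf \<theta> Dl pol T) (\<lambda>h. cum_reward m h T) =
    measure_pmf.expectation (hist_pmf \<theta> Dl pol T) (\<lambda>h. \<Sum>s=1..T. \<theta> (arm h s) * tau Dl (min (T - s) m))"
proof -
  let ?M = "hist_pmf \<theta> Dl pol T"
  define d where "d = (\<lambda>s. min (T - s) m)"
  define G where "G = (\<lambda>h. \<Sum>s=1..T. \<theta> (arm h s) * tau Dl (d s))"
  have arms: "0 \<le> \<theta> (arm h s) \<and> \<theta> (arm h s) \<le> 1" if "h \<in> set_pmf ?M" "s \<in> {1..length h}" for h s
    using set_pmf_hist_pmfD[OF that(1)] that(2) th by auto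
  have "\<bar>G h\<bar> \<le> real T" if h: "h \<in> set_pmf ?M" for h
  proof -
    have "\<bar>G h\<bar> \<le> (\<Sum>s=1..T. 1)"
      unfolding G_def using arms[OF h] set_pmf_hist_pmfD(1)[OF h] tau_nonneg[of Dl] tau_le_1[of Dl]
      by (intro order.trans[OF sum_abs] sum_mono) (auto simp: abs_mult intro: mult_le_one)
    then show ?thesis by simp
  qed
  moreover have "\<bar>obs_dev \<theta> Dl d h\<bar> \<le> real T" if h: "h \<in> set_pmf ?M" for h
    using abs_obs_dev_le[of h \<theta>] arms[OF h] set_pmf_hist_pmfD(1)[OF h] by auto
  moreover have "cum_reward m h T = obs_dev \<theta> Dl d h + G h" if h: "h \<in> set_pmf ?M" for h
    using set_pmf_hist_pmfD(1)[OF h] unfolding cum_reward_eq_sum obs_dev_def G_def d_def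
    by (simp add: sum_subtractf[symmetric] sum.distrib[symmetric])
  ultimately have "measure_pmf.expectation ?M (\<lambda>h. cum_reward m h T) =
      measure_pmf.expectation ?M (obs_dev \<theta> Dl d) + measure_pmf.expectation ?M G"
    by (subst Bochner_Integration.integral_add[symmetric])
      (auto intro!: integral_cong_AE integrable_pmf_bounded simp: AE_measure_pmf_iff)
  then show ?thesis
    using expectation_obs_dev_eq_0[where \<theta>=\<theta> and pol=pol, OF th] by (simp add: G_def d_def)
qed

lemma cum_gap_le_weighted_pulls:
  assumes arms: "\<And>s. s \<in> {1..T} \<Longrightarrow> arm h s \<in> {1..K}"
    and gap: "\<And>k. k \<in> {2..K} \<Longrightarrow> 0 < \<theta> 1 - \<theta> k"
  shows "(\<Sum>s=1..T. (\<theta> 1 - \<theta> (arm h s)) * tau Dl (min (T - s) m))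
    \<le> tau Dl m * (\<Sum>k=2..K. (\<theta> 1 - \<theta> k) * real (pulls h k (Suc T)))"
proof -
  have "(\<Sum>s=1..T. (\<theta> 1 - \<theta> (arm h s)) * tau Dl (min (T - s) m))
      \<le> (\<Sum>s=1..T. \<Sum>k=2..K. if arm h s = k then (\<theta> 1 - \<theta> k) * tau Dl m else 0)"
  proof (intro sum_mono)
    fix s assume s: "s \<in> {1..T}"
    show "(\<theta> 1 - \<theta> (arm h s)) * tau Dl (min (T - s) m)
        \<le> (\<Sum>k=2..K. if arm h s = k then (\<theta> 1 - \<theta> k) * tau Dl m else 0)"
    proof (cases "arm h s = 1")
      case False
      then have a: "arm h s \<in> {2..K}" using arms[OF s] by auto
      have "(\<theta> 1 - \<theta> (arm h s)) * tau Dl (min (T - s) m) \<le> (\<theta> 1 - \<theta> (arm h s)) * tau Dl m"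
        using gap[OF a] by (intro mult_left_mono tau_mono) auto
      then show ?thesis using a by (simp add: sum.delta)
    qed simp
  qed
  also have "\<dots> = (\<Sum>k=2..K. \<Sum>s=1..T. if arm h s = k then (\<theta> 1 - \<theta> k) * tau Dl m else 0)"
    by (rule sum.swap)
  also have "\<dots> = (\<Sum>k=2..K. (\<theta> 1 - \<theta> k) * tau Dl m * real (pulls h k (Suc T)))"
    by (intro sum.cong refl) (simp add: pulls_def sum.If_cases Int_def)
  also have "\<dots> = tau Dl m * (\<Sum>k=2..K. (\<theta> 1 - \<theta> k) * real (pulls h k (Suc T)))"
    by (simp add: sum_distrib_left algebra_simps)
  finally show ?thesis .
qed

lemma regret_eq_expected_gaps:
  assumes pol: "\<And>h. pol h \<in> {1..K}" and K: "1 \<le> K"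
    and th: "\<And>k. k \<in> {1..K} \<Longrightarrow> 0 \<le> \<theta> k \<and> \<theta> k \<le> 1"
  shows "regret \<theta> Dl m pol T = measure_pmf.expectation (hist_pmf \<theta> Dl pol T)
    (\<lambda>h. \<Sum>s=1..T. (\<theta> 1 - \<theta> (arm h s)) * tau Dl (min (T - s) m))"
proof -
  let ?M = "hist_pmf \<theta> Dl pol T"
  define C where "C = (\<Sum>s=1..T. \<theta> 1 * tau Dl (min (T - s) m))"
  define G where "G = (\<lambda>h. \<Sum>s=1..T. \<theta> (arm h s) * tau Dl (min (T - s) m))"
  have th_pol: "0 \<le> \<theta> (pol h) \<and> \<theta> (pol h) \<le> 1" for h
    using th pol by auto
  have th1: "0 \<le> \<theta> 1 \<and> \<theta> 1 \<le> 1"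
    using th K by auto
  have G_bound: "\<bar>G h\<bar> \<le> real T" if h: "h \<in> set_pmf ?M" for h
  proof -
    have "\<bar>G h\<bar> \<le> (\<Sum>s=1..T. 1)"
      using th pol set_pmf_hist_pmfD(2)[OF h] tau_nonneg[of Dl] tau_le_1[of Dl]
      unfolding G_def by (intro order.trans[OF sum_abs] sum_mono) (auto simp: abs_mult intro: mult_le_one)
    then show ?thesis by simp
  qed
  have "measure_pmf.expectation (hist_pmf \<theta> Dl (\<lambda>_. 1) T) (\<lambda>h. cum_reward m h T) =
      measure_pmf.expectation (hist_pmf \<theta> Dl (\<lambda>_. 1) T) (\<lambda>_. C)"
    unfolding expected_cum_reward[where \<theta>=\<theta> and pol="\<lambda>_. 1", OF th1] C_def
    by (intro integral_cong_AE) (auto simp: AE_measure_pmf_iff set_pmf_hist_pmfD(2) intro!: sum.cong)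
  moreover have "measure_pmf.expectation ?M (\<lambda>h. cum_reward m h T) = measure_pmf.expectation ?M G"
    unfolding G_def by (rule expected_cum_reward[where \<theta>=\<theta> and pol=pol, OF th_pol])
  ultimately have "regret \<theta> Dl m pol T = measure_pmf.expectation ?M (\<lambda>h. C - G h)"
    unfolding regret_def
    by (subst Bochner_Integration.integral_diff) (auto intro: integrable_pmf_bounded G_bound)
  also have "(\<lambda>h. C - G h) = (\<lambda>h. \<Sum>s=1..T. (\<theta> 1 - \<theta> (arm h s)) * tau Dl (min (T - s) m))"
    by (simp add: C_def G_def fun_eq_iff sum_subtractf[symmetric] algebra_simps)
  finally show ?thesis .
qed

lemma regret_le_weighted_pulls:
  assumes pol: "\<And>h. pol h \<in> {1..K}" and K: "1 \<le> K"
    and th: "\<And>k. k \<in> {1..K} \<Longrightarrow> 0 \<le> \<theta> k \<and> \<theta> k \<le> 1"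
    and gap: "\<And>k. k \<in> {2..K} \<Longrightarrow> 0 < \<theta> 1 - \<theta> k"
  shows "regret \<theta> Dl m pol T \<le> tau Dl m * (\<Sum>k=2..K. (\<theta> 1 - \<theta> k) *
      measure_pmf.expectation (hist_pmf \<theta> Dl pol T) (\<lambda>h. real (pulls h k (Suc T))))"
proof -
  let ?M = "hist_pmf \<theta> Dl pol T"
  have arms: "arm h s \<in> {1..K}" if "h \<in> set_pmf ?M" "s \<in> {1..T}" for h s
    using set_pmf_hist_pmfD(2)[OF that] pol by auto
  have pulls_integrable: "integrable (measure_pmf ?M) (\<lambda>h. real (pulls h k (Suc T)))" for k
    by (rule integrable_pmf_bounded[where B="real T"]) (use pulls_le[of _ k "Suc T"] in auto)
  have gap_term: "\<bar>(\<theta> 1 - \<theta> a) * tau Dl d\<bar> \<le> 1" if "a \<in> {1..K}" for a d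
  proof -
    have "\<bar>\<theta> 1 - \<theta> a\<bar> \<le> 1" using th[OF that] th[of 1] K by auto
    then show ?thesis
      using tau_nonneg[of Dl d] tau_le_1[of Dl d] by (simp add: abs_mult mult_le_one)
  qed
  have "\<bar>\<Sum>s=1..T. (\<theta> 1 - \<theta> (arm h s)) * tau Dl (min (T - s) m)\<bar> \<le> (\<Sum>s=1..T. 1)"
    if "h \<in> set_pmf ?M" for h
    using arms[OF that] by (intro order.trans[OF sum_abs] sum_mono gap_term) auto
  then have "integrable (measure_pmf ?M) (\<lambda>h. \<Sum>s=1..T. (\<theta> 1 - \<theta> (arm h s)) * tau Dl (min (T - s) m))"
    by (intro integrable_pmf_bounded[where B="real T"]) auto
  moreover have "integrable (measure_pmf ?M)
      (\<lambda>h. tau Dl m * (\<Sum>k=2..K. (\<theta> 1 - \<theta> k) * real (pulls h k (Suc T))))"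
    by (auto intro!: integrable_sum integrable_mult_right pulls_integrable)
  moreover have "(\<Sum>s=1..T. (\<theta> 1 - \<theta> (arm h s)) * tau Dl (min (T - s) m))
      \<le> tau Dl m * (\<Sum>k=2..K. (\<theta> 1 - \<theta> k) * real (pulls h k (Suc T)))" if "h \<in> set_pmf ?M" for h
    by (rule cum_gap_le_weighted_pulls) (use arms[OF that] gap in auto)
  ultimately have "measure_pmf.expectation ?M (\<lambda>h. \<Sum>s=1..T. (\<theta> 1 - \<theta> (arm h s)) * tau Dl (min (T - s) m))
      \<le> measure_pmf.expectation ?M
      (\<lambda>h. tau Dl m * (\<Sum>k=2..K. (\<theta> 1 - \<theta> k) * real (pulls h k (Suc T))))"
    by (intro integral_mono_AE) (auto simp: AE_measure_pmf_iff)
  then have "regret \<theta> Dl m pol T \<le> measure_pmf.expectation ?M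
      (\<lambda>h. tau Dl m * (\<Sum>k=2..K. (\<theta> 1 - \<theta> k) * real (pulls h k (Suc T))))"
    using regret_eq_expected_gaps[of pol K \<theta> Dl m T] pol K th by simp
  also have "\<dots> = tau Dl m * (\<Sum>k=2..K. (\<theta> 1 - \<theta> k) *
      measure_pmf.expectation ?M (\<lambda>h. real (pulls h k (Suc T))))"
    by (simp add: integral_sum pulls_integrable)
  finally show ?thesis .
qed

section \<open>Logarithmic regret\<close>

lemma rate_from_margin_bounds:
  fixes R g :: "nat \<Rightarrow> real" and B :: "real \<Rightarrow> real"
  assumes g: "filterlim g at_top sequentially" and lim: "(B \<longlongrightarrow> B0) (at_right 0)"
    and bounds: "\<forall>\<^sub>F \<delta> in at_right 0. \<exists>C. \<forall>T. R T \<le> g T * B \<delta> + C"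
  shows "\<exists>f. ((\<lambda>T. f T / g T) \<longlongrightarrow> 0) sequentially \<and> (\<forall>T. R T \<le> g T * B0 + f T)"
proof -
  define f where "f T = max 0 (R T - g T * B0)" for T
  have "((\<lambda>T. f T / g T) \<longlongrightarrow> 0) sequentially"
  proof (rule LIMSEQ_I)
    fix \<eta> :: real assume \<eta>: "0 < \<eta>"
    have "\<forall>\<^sub>F \<delta> in at_right 0. B \<delta> < B0 + \<eta> / 4"
      using order_tendstoD(2)[OF lim] \<eta> by simp
    then obtain \<delta> C where \<delta>: "B \<delta> < B0 + \<eta> / 4" and C: "\<And>T. R T \<le> g T * B \<delta> + C"
      using eventually_happens'[OF _ eventually_conj[OF _ bounds]] by fastforce
    obtain N where N: "\<And>T. N \<le> T \<Longrightarrow> max 1 (4 * \<bar>C\<bar> / \<eta>) < g T"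
      using g unfolding filterlim_at_top_dense eventually_sequentially by blast
    show "\<exists>N. \<forall>T\<ge>N. norm (f T / g T - 0) < \<eta>"
    proof (intro exI allI impI)
      fix T assume T: "N \<le> T"
      have l: "1 < g T" "\<bar>C\<bar> < \<eta> / 4 * g T"
        using N[OF T] \<eta> by (auto simp: field_simps)
      have "R T - g T * B0 \<le> g T * (B \<delta> - B0) + C"
        using C[of T] by (simp add: algebra_simps)
      also have "\<dots> \<le> g T * (\<eta> / 4) + \<bar>C\<bar>"
        using \<delta> l by (intro add_mono mult_left_mono) auto
      also have "\<dots> < \<eta> / 2 * g T"
        using l by simp
      finally have "R T - g T * B0 < \<eta> / 2 * g T" .
      moreover have "0 < \<eta> / 2 * g T" using l \<eta> by simp
      ultimately have "f T < \<eta> / 2 * g T"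
        unfolding f_def by (metis max_less_iff_conj)
      then have "\<bar>f T / g T\<bar> < \<eta> / 2"
        using l by (simp add: f_def field_simps)
      then have "\<bar>f T / g T\<bar> < \<eta>"
        using \<eta> by linarith
      then show "norm (f T / g T - 0) < \<eta>"
        by simp
    qed
  qed
  moreover have "R T \<le> g T * B0 + f T" for T
    by (simp add: f_def)
  ultimately show ?thesis by blast
qed

lemma sum_exp_neg_log_le_suminf:
  assumes "0 < \<epsilon>"
  shows "(\<Sum>t=1..T. exp (- ((1 + \<epsilon>) * ln (real t)))) \<le> (\<Sum>t. real t powr (- (1 + \<epsilon>)))"
proof -
  have summable: "summable (\<lambda>t. real t powr (- (1 + \<epsilon>)))"
    using assms by (subst summable_real_powr_iff) auto
  have "(\<Sum>t=1..T. exp (- ((1 + \<epsilon>) * ln (real t)))) = (\<Sum>t=1..T. real t powr (- (1 + \<epsilon>)))"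
    by (intro sum.cong refl) (auto simp: powr_def algebra_simps)
  also have "\<dots> \<le> (\<Sum>t<Suc T. real t powr (- (1 + \<epsilon>)))"
    by (rule sum_mono2) auto
  also have "\<dots> \<le> (\<Sum>t. real t powr (- (1 + \<epsilon>)))"
    by (rule sum_le_suminf[OF summable]) auto
  finally show ?thesis .
qed

context delayed_ucb_run
begin

lemma regret_le_beta_plus_const:
  assumes gap: "\<And>k. k \<in> {2..K} \<Longrightarrow> 0 < \<theta> 1 - \<theta> k"
    and \<delta>: "0 < \<delta>" "\<And>k. k \<in> {2..K} \<Longrightarrow> 2 * \<delta> < \<theta> 1 - \<theta> k"
    and Sb: "\<And>T. (\<Sum>t=1..T. exp (- beta t)) \<le> Sb"
  shows "\<exists>C. \<forall>T. regret \<theta> Dl m pol T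
    \<le> beta T * (\<Sum>k=2..K. (\<theta> 1 - \<theta> k) / (2 * tau Dl m * (\<theta> 1 - \<theta> k - 2 * \<delta>)\<^sup>2)) + C"
proof -
  define c where "c = \<delta> * tau Dl m"
  define R where "R = real (K + m) + 2 * (real m - 1) + 1
    + exp (4 * c * (c * (real m - 1) + (real m - 1))) / (1 - exp (- 2 * c\<^sup>2))
    + exp (4 * c\<^sup>2 * (real m - 1)) / (1 - exp (- 2 * c\<^sup>2)) * Sb"
  let ?G = "\<lambda>k. (\<theta> 1 - \<theta> k) / (2 * tau Dl m * (\<theta> 1 - \<theta> k - 2 * \<delta>)\<^sup>2)"
  have "regret \<theta> Dl m pol T \<le> beta T * (\<Sum>k=2..K. ?G k) + (\<Sum>k=2..K. tau Dl m * (\<theta> 1 - \<theta> k) * R)" for T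
  proof -
    have "regret \<theta> Dl m pol T \<le> tau Dl m * (\<Sum>k=2..K. (\<theta> 1 - \<theta> k) *
        measure_pmf.expectation (hist_pmf \<theta> Dl pol T) (\<lambda>h. real (pulls h k (Suc T))))"
      using delayed_ucb_arm_range[OF delayed_ucb] K_pos theta_range gap by (rule regret_le_weighted_pulls)
    also have "\<dots> \<le> (\<Sum>k=2..K. beta T * ?G k + tau Dl m * (\<theta> 1 - \<theta> k) * R)"
      unfolding sum_distrib_left
    proof (intro sum_mono)
      fix k assume k: "k \<in> {2..K}"
      have "\<tau> * d * (b / (2 * (g * \<tau>)\<^sup>2)) = b * (d / (2 * \<tau> * g\<^sup>2))"
        if "g \<noteq> 0" "\<tau> \<noteq> 0" for \<tau> d b g :: real
        using that by (simp add: power2_eq_square field_simps)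
      moreover have "\<theta> 1 - \<theta> k - 2 * \<delta> \<noteq> 0"
        using \<delta>(2)[OF k] by simp
      ultimately have "tau Dl m * (\<theta> 1 - \<theta> k) * (beta T / (2 * ((\<theta> 1 - \<theta> k - 2 * \<delta>) * tau Dl m)\<^sup>2)) = beta T * ?G k"
        using tau_pos by simp
      moreover have "measure_pmf.expectation (hist_pmf \<theta> Dl pol T) (\<lambda>h. real (pulls h k (Suc T)))
          \<le> beta T / (2 * ((\<theta> 1 - \<theta> k - 2 * \<delta>) * tau Dl m)\<^sup>2) + R"
        using expected_suboptimal_pulls_le[OF k \<delta>(1) \<delta>(2)[OF k] Sb, of T] by (simp add: R_def c_def)
      ultimately show "tau Dl m * ((\<theta> 1 - \<theta> k) * measure_pmf.expectation (hist_pmf \<theta> Dl pol T)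
          (\<lambda>h. real (pulls h k (Suc T)))) \<le> beta T * ?G k + tau Dl m * (\<theta> 1 - \<theta> k) * R"
        using mult_left_mono[of _ _ "tau Dl m * (\<theta> 1 - \<theta> k)"] tau_pos gap[OF k]
        by (smt (verit) mult.assoc distrib_left mult_nonneg_nonneg)
    qed
    finally show ?thesis by (simp add: sum.distrib sum_distrib_left)
  qed
  then show ?thesis by blast
qed

lemma regret_asymptotics:
  assumes gap: "\<And>k. k \<in> {2..K} \<Longrightarrow> 0 < \<theta> 1 - \<theta> k"
    and beta: "filterlim beta at_top sequentially"
    and Sb: "\<And>T. (\<Sum>t=1..T. exp (- beta t)) \<le> Sb"
  shows "\<exists>f. ((\<lambda>T. f T / beta T) \<longlongrightarrow> 0) sequentially \<and>
    (\<forall>T. regret \<theta> Dl m pol T \<le> beta T * (\<Sum>k=2..K. 1 / (2 * tau Dl m * (\<theta> 1 - \<theta> k))) + f T)"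
proof -
  define S where "S \<delta> = (\<Sum>k=2..K. (\<theta> 1 - \<theta> k) / (2 * tau Dl m * (\<theta> 1 - \<theta> k - 2 * \<delta>)\<^sup>2))" for \<delta> :: real
  have "(S \<longlongrightarrow> S 0) (at_right 0)"
    unfolding S_def
  proof (intro tendsto_intros)
    fix k assume "k \<in> {2..K}"
    then show "2 * tau Dl m * (\<theta> 1 - \<theta> k - 2 * 0)\<^sup>2 \<noteq> 0"
      using gap[of k] tau_pos by simp
  qed
  moreover have "S 0 = (\<Sum>k=2..K. 1 / (2 * tau Dl m * (\<theta> 1 - \<theta> k)))"
    unfolding S_def
  proof (intro sum.cong refl)
    fix k assume "k \<in> {2..K}"
    then have "0 < \<theta> 1 - \<theta> k" by (rule gap)
    then show "(\<theta> 1 - \<theta> k) / (2 * tau Dl m * (\<theta> 1 - \<theta> k - 2 * 0)\<^sup>2) = 1 / (2 * tau Dl m * (\<theta> 1 - \<theta> k))"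
      by (simp add: power2_eq_square)
  qed
  moreover have "\<forall>\<^sub>F \<delta> in at_right 0. \<exists>C. \<forall>T. regret \<theta> Dl m pol T \<le> beta T * S \<delta> + C"
  proof -
    have "\<forall>\<^sub>F \<delta> in at_right 0. 2 * \<delta> < \<theta> 1 - \<theta> k" if "k \<in> {2..K}" for k
      unfolding eventually_at_right_field using gap[OF that]
      by (intro exI[of _ "(\<theta> 1 - \<theta> k) / 2"]) auto
    then have "\<forall>\<^sub>F \<delta> in at_right 0. 0 < \<delta> \<and> (\<forall>k\<in>{2..K}. 2 * \<delta> < \<theta> 1 - \<theta> k)"
      by (intro eventually_conj eventually_at_right_less eventually_ball_finite) auto
    then show ?thesis
      by (rule eventually_mono) (use regret_le_beta_plus_const[OF gap _ _ Sb] in \<open>auto simp: S_def\<close>)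
  qed
  ultimately show ?thesis
    using rate_from_margin_bounds[OF beta] by simp
qed

end

theorem theorem9:
  fixes K m :: nat and \<theta> :: "nat \<Rightarrow> real" and Dl :: "nat pmf"
    and \<epsilon> :: real and pol :: "hist \<Rightarrow> nat"
  assumes "K \<ge> 1" and "m \<ge> 1"
    and "\<And>k. k \<in> {1..K} \<Longrightarrow> 0 \<le> \<theta> k \<and> \<theta> k \<le> 1"
    and "\<And>k. k \<in> {2..K} \<Longrightarrow> \<theta> 1 - \<theta> k > 0"
    and "tau Dl m > 0"
    and "\<epsilon> > 0"
    and "is_delayed_ucb K Dl m (\<lambda>t. (1 + \<epsilon>) * ln (real t)) pol"
  shows "\<exists>f :: nat \<Rightarrow> real.
           ((\<lambda>T. f T / ln (real T)) \<longlongrightarrow> 0) sequentially \<and>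
           (\<forall>T. regret \<theta> Dl m pol T
                 \<le> (1 + \<epsilon>) * ln (real T) * (\<Sum>k\<in>{2..K}. 1 / (2 * tau Dl m * (\<theta> 1 - \<theta> k))) + f T)"
proof -
  note \<epsilon> = assms(6)
  interpret delayed_ucb_run K m Dl "\<lambda>t. (1 + \<epsilon>) * ln (real t)" pol \<theta>
  proof
    show "0 \<le> (1 + \<epsilon>) * ln (real t)" for t
      using \<epsilon> by (cases "t = 0") auto
    then show "(1 + \<epsilon>) * ln (real t) \<le> (1 + \<epsilon>) * ln (real t')" if "t \<le> t'" for t t'
      using \<epsilon> that by (cases "t = 0") (auto intro: mult_left_mono)
  qed (use assms in auto)
  have "filterlim (\<lambda>T. (1 + \<epsilon>) * ln (real T)) at_top sequentially"
    using \<epsilon> by (intro filterlim_tendsto_pos_mult_at_top[OF tendsto_const]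
        filterlim_compose[OF ln_at_top filterlim_real_sequentially]) auto
  then obtain f where f: "((\<lambda>T. f T / ((1 + \<epsilon>) * ln (real T))) \<longlongrightarrow> 0) sequentially"
    and bound: "\<And>T. regret \<theta> Dl m pol T
      \<le> (1 + \<epsilon>) * ln (real T) * (\<Sum>k=2..K. 1 / (2 * tau Dl m * (\<theta> 1 - \<theta> k))) + f T"
    using regret_asymptotics[OF assms(4) _ sum_exp_neg_log_le_suminf[OF \<epsilon>]] by blast
  have "((\<lambda>T. (1 + \<epsilon>) * (f T / ((1 + \<epsilon>) * ln (real T)))) \<longlongrightarrow> (1 + \<epsilon>) * 0) sequentially"
    by (rule tendsto_mult[OF tendsto_const f])
  moreover have "(1 + \<epsilon>) * (f T / ((1 + \<epsilon>) * ln (real T))) = f T / ln (real T)" for T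
    using \<epsilon> by simp
  ultimately have "((\<lambda>T. f T / ln (real T)) \<longlongrightarrow> 0) sequentially"
    by simp
  with bound show ?thesis by blast
qed

end
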